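(* Fix $\beta\ge1$ and let $\{X_i\}_{i\ge1}$, $W_n$, $\xi$, $\mathcal H$ and $\alpha$ be as in the context, with $\sup_{i\ge1}\mathbb E[|X_i|^{2+\alpha}]<\infty$. For $f\in\mathcal H$ let $\xi_k:=f(W_k)-\mathbb E[f(W_k)]$ and $Z_l:=\sum_{4^{l-1}\le i<4^l}\frac{\xi_i}{i}$. Then for every $f\in\mathcal H$ there exist positive constants $M_3,M_4$ such that for all $1\le l<m$, $$\mathbb E[Z_lZ_m]\le 9M_3\cdot2^{l-m}+9M_4\cdot2^{\alpha(1-m)}.$$
   Context: Sub-linear expectation space $(\Omega,\mathscr H,\mathbb E)$: $(\Omega,\mathcal F)$ a measurable space, $\mathscr H$ a linear space of real measurable functions closed under $(X_1,\dots,X_n)\mapsto\varphi(X_1,\dots,X_n)$ for $\varphi\in C_{b,Lip}(\mathbb R^n)$ (bounded Lipschitz functions), and $\mathbb E:\mathscr H\to\mathbb R$ monotone, constant preserving, sub-additive and positively homogeneous; it is assumed $\mathbb E[X]=\sup_{P\in\mathcal P}E_P[X]$ for a family $\mathcal P$ of $\sigma$-additive probability measures. $(\widetilde\Omega,\widetilde{\mathscr H},\widetilde{\mathbb E})$ is another sub-linear expectation space. Both satisfy condition (A): for every $X$ and every sequence $f_n\in C_{b,Lip}(\mathbb R)$ with $f_n\downarrow0$, $\mathbb E[f_n(X)]\downarrow0$ (resp. $\widetilde{\mathbb E}[f_n(X)]\downarrow0$). Independence: $Y\in\mathscr H^n$ is independent of $X\in\mathscr H^m$ if $\mathbb E[\varphi(X,Y)]=\mathbb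 E\big[\mathbb E[\varphi(x,Y)]|_{x=X}\big]$ for all $\varphi\in C_{b,Lip}(\mathbb R^{m+n})$; $\{X_n\}$ is independent if $X_{n+1}$ is independent of $(X_1,\dots,X_n)$ for every $n$. Standing setting: $\{X_i\}$ is independent in $(\Omega,\mathscr H,\mathbb E)$ with $\mathbb E[X_i]=\mathbb E[-X_i]=0$, $\overline\sigma_i=\sqrt{\mathbb E[X_i^2]}$, $\underline\sigma_i=\sqrt{-\mathbb E[-X_i^2]}$, $\overline\sigma_i/\underline\sigma_i=\beta$ for all $i$, $0<\inf_i\underline\sigma_i^2\le\sup_i\overline\sigma_i^2<\infty$; $S_n=\sum_{i\le n}X_i$, $\sigma_i=(\underline\sigma_i+\overline\sigma_i)/2$, $B_n=\sqrt{\sum_{i\le n}\sigma_i^2}$, $W_n=S_n/B_n$. $\xi$ is $G$-normal under $\widetilde{\mathbb E}$ (for each $f\in C_{b,Lip}(\mathbb R)$, $u(t,x)=\widetilde{\mathbb E}[f(x+\sqrt t\xi)]$ is the unique viscosity solution of $\partial_tu-G(\partial_{xx}u)=0$, $u(0,\cdot)=f$, with $G(a)=\frac12\widetilde{\mathbb E}[a\xi^2]$), with $\sqrt{\widetilde{\mathbb E}[\xi^2]}=\frac{2\beta}{1+\beta}$, $\sqrt{-\widetilde{\mathbb E}[-\xi^2]}=\frac{2}{1+\beta}$. $\mathcal H:=\{f\in C_{b,Lip}(\mathbb R):\widetilde{\mathbb E}[f(\xi)]=-\widetilde{\mathbb E}[-f(\xi)]\}$. $\alpha\in(0,1)$ is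 the constant from Song's theorem (cited): there exist $\alpha\in(0,1)$ depending on $\beta$ and $C_{\alpha,\beta}>0$ such that for every such sequence and every $n$, $\sup_{|f|_{Lip}\le1}|\mathbb E[f(W_n)]-\widetilde{\mathbb E}[f(\xi)]|\le C_{\alpha,\beta}\sup_{1\le i\le n}\{\frac{\mathbb E[|X_i|^{2+\alpha}]}{\sigma_i^{2+\alpha}}(\frac{\sigma_i}{B_n})^\alpha\}$. *)

theory Defs
  imports "HOL-Probability.Probability"
begin

definition list_dist :: "real list \<Rightarrow> real list \<Rightarrow> real" where
  "list_dist xs ys = sqrt (\<Sum>i<length xs. (xs ! i - ys ! i)^2)"

text \<open>phi in C_{b,Lip}(R^n), functions on R^n represented on real lists of length n.\<close>
definition cblip :: "nat \<Rightarrow> (real list \<Rightarrow> real) \<Rightarrow> bool" where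
  "cblip n \<phi> \<longleftrightarrow>
     (\<exists>B. \<forall>xs. length xs = n \<longrightarrow> \<bar>\<phi> xs\<bar> \<le> B) \<and>
     (\<exists>L. \<forall>xs ys. length xs = n \<longrightarrow> length ys = n \<longrightarrow>
           \<bar>\<phi> xs - \<phi> ys\<bar> \<le> L * list_dist xs ys)"

definition cblip1 :: "(real \<Rightarrow> real) \<Rightarrow> bool" where
  "cblip1 f \<longleftrightarrow> (\<exists>B. \<forall>x. \<bar>f x\<bar> \<le> B) \<and> (\<exists>L. \<forall>x y. \<bar>f x - f y\<bar> \<le> L * \<bar>x - y\<bar>)"

section \<open>Sub-linear expectation spaces\<close>

definition sublinear_space ::
  "'w measure \<Rightarrow> ('w \<Rightarrow> real) set \<Rightarrow> (('w \<Rightarrow> real) \<Rightarrow> real) \<Rightarrow> bool" where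
  "sublinear_space M H E \<longleftrightarrow>
     H \<subseteq> borel_measurable M \<and>
     (\<lambda>_. 0) \<in> H \<and>
     (\<forall>X\<in>H. \<forall>Y\<in>H. (\<lambda>w. X w + Y w) \<in> H) \<and>
     (\<forall>X\<in>H. \<forall>c. (\<lambda>w. c * X w) \<in> H) \<and>
     (\<forall>Xs \<phi>. set Xs \<subseteq> H \<longrightarrow> cblip (length Xs) \<phi> \<longrightarrow>
        (\<lambda>w. \<phi> (map (\<lambda>X. X w) Xs)) \<in> H) \<and>
     (\<forall>X\<in>H. \<forall>Y\<in>H. (\<forall>w\<in>space M. X w \<le> Y w) \<longrightarrow> E X \<le> E Y) \<and>
     (\<forall>c. E (\<lambda>_. c) = c) \<and>
     (\<forall>X\<in>H. \<forall>Y\<in>H. E (\<lambda>w. X w + Y w) \<le> E X + E Y) \<and>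
     (\<forall>X\<in>H. \<forall>c\<ge>0. E (\<lambda>w. c * X w) = c * E X) \<and>
     (\<exists>\<P>. \<P> \<noteq> {} \<and> (\<forall>P\<in>\<P>. prob_space P \<and> sets P = sets M) \<and>
        (\<forall>X\<in>H. (\<forall>P\<in>\<P>. integrable P X \<and> integral\<^sup>L P X \<le> E X) \<and>
                 (\<forall>e>0. \<exists>P\<in>\<P>. E X - e < integral\<^sup>L P X)))"

definition condA :: "('w \<Rightarrow> real) set \<Rightarrow> (('w \<Rightarrow> real) \<Rightarrow> real) \<Rightarrow> bool" where
  "condA H E \<longleftrightarrow>
     (\<forall>X\<in>H. \<forall>fs :: nat \<Rightarrow> real \<Rightarrow> real.
        (\<forall>n. cblip1 (fs n)) \<longrightarrow> (\<forall>n x. fs (Suc n) x \<le> fs n x) \<longrightarrow>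
        (\<forall>x. (\<lambda>n. fs n x) \<longlonglongrightarrow> 0) \<longrightarrow>
        (\<lambda>n. E (\<lambda>w. fs n (X w))) \<longlonglongrightarrow> 0)"

definition indep_of :: "(('w \<Rightarrow> real) \<Rightarrow> real) \<Rightarrow> ('w \<Rightarrow> real) list \<Rightarrow> ('w \<Rightarrow> real) list \<Rightarrow> bool" where
  "indep_of E Ys Xs \<longleftrightarrow>
     (\<forall>\<phi>. cblip (length Xs + length Ys) \<phi> \<longrightarrow>
        E (\<lambda>w. \<phi> (map (\<lambda>X. X w) Xs @ map (\<lambda>Y. Y w) Ys)) =
        E (\<lambda>w. E (\<lambda>v. \<phi> (map (\<lambda>X. X w) Xs @ map (\<lambda>Y. Y v) Ys))))"

text \<open>Sequence X_1, X_2, ... (index 0 unused) is independent.\<close>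
definition indep_seq :: "(('w \<Rightarrow> real) \<Rightarrow> real) \<Rightarrow> (nat \<Rightarrow> 'w \<Rightarrow> real) \<Rightarrow> bool" where
  "indep_seq E X \<longleftrightarrow> (\<forall>n\<ge>1. indep_of E [X (n+1)] (map X [1..<n+1]))"

definition sig_up :: "(('w \<Rightarrow> real) \<Rightarrow> real) \<Rightarrow> (nat \<Rightarrow> 'w \<Rightarrow> real) \<Rightarrow> nat \<Rightarrow> real" where
  "sig_up E X i = sqrt (E (\<lambda>w. (X i w)^2))"

definition sig_lo :: "(('w \<Rightarrow> real) \<Rightarrow> real) \<Rightarrow> (nat \<Rightarrow> 'w \<Rightarrow> real) \<Rightarrow> nat \<Rightarrow> real" where
  "sig_lo E X i = sqrt (- (E (\<lambda>w. - ((X i w)^2))))"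

definition sigm :: "(('w \<Rightarrow> real) \<Rightarrow> real) \<Rightarrow> (nat \<Rightarrow> 'w \<Rightarrow> real) \<Rightarrow> nat \<Rightarrow> real" where
  "sigm E X i = (sig_lo E X i + sig_up E X i) / 2"

definition Bn :: "(('w \<Rightarrow> real) \<Rightarrow> real) \<Rightarrow> (nat \<Rightarrow> 'w \<Rightarrow> real) \<Rightarrow> nat \<Rightarrow> real" where
  "Bn E X n = sqrt (\<Sum>i=1..n. (sigm E X i)^2)"

definition Sn :: "(nat \<Rightarrow> 'w \<Rightarrow> real) \<Rightarrow> nat \<Rightarrow> 'w \<Rightarrow> real" where
  "Sn X n = (\<lambda>w. \<Sum>i=1..n. X i w)"

definition Wn :: "(('w \<Rightarrow> real) \<Rightarrow> real) \<Rightarrow> (nat \<Rightarrow> 'w \<Rightarrow> real) \<Rightarrow> nat \<Rightarrow> 'w \<Rightarrow> real" where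
  "Wn E X n = (\<lambda>w. Sn X n w / Bn E X n)"

text \<open>Standing assumptions on a sequence (indices i >= 1).\<close>
definition standing ::
  "('w \<Rightarrow> real) set \<Rightarrow> (('w \<Rightarrow> real) \<Rightarrow> real) \<Rightarrow> real \<Rightarrow> (nat \<Rightarrow> 'w \<Rightarrow> real) \<Rightarrow> bool" where
  "standing H E \<beta> X \<longleftrightarrow>
     (\<forall>i\<ge>1. X i \<in> H \<and> (\<lambda>w. (X i w)^2) \<in> H) \<and>
     indep_seq E X \<and>
     (\<forall>i\<ge>1. E (X i) = 0 \<and> E (\<lambda>w. - X i w) = 0) \<and>
     (\<forall>i\<ge>1. sig_up E X i / sig_lo E X i = \<beta>) \<and>
     (\<exists>c>0. \<forall>i\<ge>1. c \<le> (sig_lo E X i)^2) \<and>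
     (\<exists>C. \<forall>i\<ge>1. (sig_up E X i)^2 \<le> C)"

section \<open>Viscosity solutions and G-normal distribution\<close>

definition test_fn ::
  "(real \<Rightarrow> real \<Rightarrow> real) \<Rightarrow> (real \<Rightarrow> real \<Rightarrow> real) \<Rightarrow> (real \<Rightarrow> real \<Rightarrow> real)
     \<Rightarrow> (real \<Rightarrow> real \<Rightarrow> real) \<Rightarrow> bool" where
  "test_fn \<phi> \<phi>t \<phi>x \<phi>xx \<longleftrightarrow>
     (\<forall>t>0. \<forall>x. ((\<lambda>s. \<phi> s x) has_real_derivative \<phi>t t x) (at t) \<and>
                ((\<lambda>y. \<phi> t y) has_real_derivative \<phi>x t x) (at x) \<and>
                ((\<lambda>y. \<phi>x t y) has_real_derivative \<phi>xx t x) (at x)) \<and>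
     continuous_on ({0<..} \<times> UNIV) (\<lambda>(t,x). \<phi> t x) \<and>
     continuous_on ({0<..} \<times> UNIV) (\<lambda>(t,x). \<phi>t t x) \<and>
     continuous_on ({0<..} \<times> UNIV) (\<lambda>(t,x). \<phi>x t x) \<and>
     continuous_on ({0<..} \<times> UNIV) (\<lambda>(t,x). \<phi>xx t x)"

definition visc_solution ::
  "(real \<Rightarrow> real) \<Rightarrow> (real \<Rightarrow> real) \<Rightarrow> (real \<Rightarrow> real \<Rightarrow> real) \<Rightarrow> bool" where
  "visc_solution G f u \<longleftrightarrow>
     continuous_on ({0..} \<times> UNIV) (\<lambda>(t,x). u t x) \<and>
     (\<forall>x. u 0 x = f x) \<and>
     (\<forall>t0 x0 \<phi> \<phi>t \<phi>x \<phi>xx. t0 > 0 \<longrightarrow> test_fn \<phi> \<phi>t \<phi>x \<phi>xx \<longrightarrow> \<phi> t0 x0 = u t0 x0 \<longrightarrow>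
        (\<exists>r>0. \<forall>t x. t > 0 \<longrightarrow> \<bar>t - t0\<bar> < r \<longrightarrow> \<bar>x - x0\<bar> < r \<longrightarrow> u t x \<le> \<phi> t x) \<longrightarrow>
        \<phi>t t0 x0 - G (\<phi>xx t0 x0) \<le> 0) \<and>
     (\<forall>t0 x0 \<phi> \<phi>t \<phi>x \<phi>xx. t0 > 0 \<longrightarrow> test_fn \<phi> \<phi>t \<phi>x \<phi>xx \<longrightarrow> \<phi> t0 x0 = u t0 x0 \<longrightarrow>
        (\<exists>r>0. \<forall>t x. t > 0 \<longrightarrow> \<bar>t - t0\<bar> < r \<longrightarrow> \<bar>x - x0\<bar> < r \<longrightarrow> u t x \<ge> \<phi> t x) \<longrightarrow>
        \<phi>t t0 x0 - G (\<phi>xx t0 x0) \<ge> 0)"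

definition G_of :: "(('v \<Rightarrow> real) \<Rightarrow> real) \<Rightarrow> ('v \<Rightarrow> real) \<Rightarrow> real \<Rightarrow> real" where
  "G_of E' \<xi> a = 1/2 * E' (\<lambda>w. a * (\<xi> w)^2)"

definition G_normal :: "('v \<Rightarrow> real) set \<Rightarrow> (('v \<Rightarrow> real) \<Rightarrow> real) \<Rightarrow> ('v \<Rightarrow> real) \<Rightarrow> bool" where
  "G_normal H' E' \<xi> \<longleftrightarrow>
     \<xi> \<in> H' \<and> (\<lambda>w. (\<xi> w)^2) \<in> H' \<and>
     (\<forall>f. cblip1 f \<longrightarrow>
        visc_solution (G_of E' \<xi>) f (\<lambda>t x. E' (\<lambda>w. f (x + sqrt t * \<xi> w))) \<and>
        (\<forall>v. visc_solution (G_of E' \<xi>) f v \<longrightarrow> (\<exists>B. \<forall>t\<ge>0. \<forall>x. \<bar>v t x\<bar> \<le> B) \<longrightarrow>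
             (\<forall>t\<ge>0. \<forall>x. v t x = E' (\<lambda>w. f (x + sqrt t * \<xi> w)))))"

definition calH :: "(('v \<Rightarrow> real) \<Rightarrow> real) \<Rightarrow> ('v \<Rightarrow> real) \<Rightarrow> (real \<Rightarrow> real) set" where
  "calH E' \<xi> = {f. cblip1 f \<and> E' (\<lambda>w. f (\<xi> w)) = - E' (\<lambda>w. - f (\<xi> w))}"

text \<open>alpha in (0,1) and C > 0 are such that Song's Berry--Esseen bound holds for every
  sequence in (Omega,H,E) satisfying the standing assumptions with ratio beta.\<close>
definition song_bound ::
  "('w \<Rightarrow> real) set \<Rightarrow> (('w \<Rightarrow> real) \<Rightarrow> real) \<Rightarrow> (('v \<Rightarrow> real) \<Rightarrow> real) \<Rightarrow> ('v \<Rightarrow> real)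
     \<Rightarrow> real \<Rightarrow> real \<Rightarrow> real \<Rightarrow> bool" where
  "song_bound H E E' \<xi> \<beta> \<alpha> C \<longleftrightarrow>
     (\<forall>Y. standing H E \<beta> Y \<longrightarrow> (\<forall>i\<ge>1. (\<lambda>w. \<bar>Y i w\<bar> powr (2 + \<alpha>)) \<in> H) \<longrightarrow>
        (\<forall>n\<ge>1. \<forall>f. cblip1 f \<longrightarrow> (\<forall>x y. \<bar>f x - f y\<bar> \<le> \<bar>x - y\<bar>) \<longrightarrow>
           \<bar>E (\<lambda>w. f (Wn E Y n w)) - E' (\<lambda>w. f (\<xi> w))\<bar> \<le>
             C * Max ((\<lambda>i. E (\<lambda>w. \<bar>Y i w\<bar> powr (2 + \<alpha>)) / sigm E Y i powr (2 + \<alpha>)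
                          * (sigm E Y i / Bn E Y n) powr \<alpha>) ` {1..n})))"

definition xi_k :: "(('w \<Rightarrow> real) \<Rightarrow> real) \<Rightarrow> (nat \<Rightarrow> 'w \<Rightarrow> real) \<Rightarrow> (real \<Rightarrow> real) \<Rightarrow> nat \<Rightarrow> 'w \<Rightarrow> real" where
  "xi_k E X f k = (\<lambda>w. f (Wn E X k w) - E (\<lambda>v. f (Wn E X k v)))"

definition Z_l :: "(('w \<Rightarrow> real) \<Rightarrow> real) \<Rightarrow> (nat \<Rightarrow> 'w \<Rightarrow> real) \<Rightarrow> (real \<Rightarrow> real) \<Rightarrow> nat \<Rightarrow> 'w \<Rightarrow> real" where
  "Z_l E X f l = (\<lambda>w. \<Sum>i\<in>{4^(l-1)..<4^l}. xi_k E X f i w / real i)"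

end

(*
  Fix i < j and write W_j = (S_j - S_i)/B_j + (B_i/B_j) W_i.  Replacing W_j by the scaled
  increment changes f(W_j) by at most min(2B, L (B_i/B_j) |W_i|), whose upper expectation
  Song's rate bounds by a constant times B_i/B_j.  For the increment, independence lets one
  condition on S_i; since f has no mean uncertainty under the G-normal law, Song's rate makes
  the upper and lower means of f(W_j) agree up to O(j^(-alpha/2)), so the conditional
  covariance is O(j^(-alpha/2)) as well.  Hence E[xi_i xi_j] <= c (B_i/B_j + j^(-alpha/2)).
  For i and j in the blocks l < m this is c' (2^(l-m) + 2^(alpha(1-m))), and the weights 1/i
  sum to at most 3 on each block, which produces the factor 9.
*)
theory Submission
  imports Defs
begin

lemma cblip1I:
  assumes "\<And>x. \<bar>f x\<bar> \<le> B" and "\<And>x y. \<bar>f x - f y\<bar> \<le> L * \<bar>x - y\<bar>"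
  shows "cblip1 f"
  using assms unfolding cblip1_def by blast

lemma cblip1E:
  assumes "cblip1 f"
  obtains B L where "B > 0" "\<And>x. \<bar>f x\<bar> \<le> B" "L > 0" "\<And>x y. \<bar>f x - f y\<bar> \<le> L * \<bar>x - y\<bar>"
proof -
  obtain B L where B: "\<And>x. \<bar>f x\<bar> \<le> B" and L: "\<And>x y. \<bar>f x - f y\<bar> \<le> L * \<bar>x - y\<bar>"
    using assms unfolding cblip1_def by blast
  have "\<bar>f x\<bar> \<le> \<bar>B\<bar> + 1" for x
    using B[of x] by linarith
  moreover have "\<bar>f x - f y\<bar> \<le> (\<bar>L\<bar> + 1) * \<bar>x - y\<bar>" for x y
    using L[of x y] mult_right_mono[of L "\<bar>L\<bar> + 1" "\<bar>x - y\<bar>"] by linarith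
  ultimately show thesis
    by (intro that[of "\<bar>B\<bar> + 1" "\<bar>L\<bar> + 1"]) auto
qed

lemma cblip1_affine: "cblip1 f \<Longrightarrow> cblip1 (\<lambda>x. p * f x + q)"
proof (elim cblip1E)
  fix B L assume "B > 0" and B: "\<And>x. \<bar>f x\<bar> \<le> B"
    and "L > 0" and L: "\<And>x y. \<bar>f x - f y\<bar> \<le> L * \<bar>x - y\<bar>"
  show "cblip1 (\<lambda>x. p * f x + q)"
  proof (rule cblip1I)
    show "\<bar>p * f x + q\<bar> \<le> \<bar>p\<bar> * B + \<bar>q\<bar>" for x
      using mult_left_mono[OF B[of x] abs_ge_zero[of p]] abs_triangle_ineq[of "p * f x" q]
      by (simp add: abs_mult)
    show "\<bar>(p * f x + q) - (p * f y + q)\<bar> \<le> (\<bar>p\<bar> * L) * \<bar>x - y\<bar>" for x y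
      using mult_left_mono[OF L[of x y] abs_ge_zero[of p]]
      by (simp add: abs_mult flip: right_diff_distrib)
  qed
qed

lemma cblip1_scale_arg: "cblip1 f \<Longrightarrow> cblip1 (\<lambda>x. f (r * x))"
proof (elim cblip1E)
  fix B L assume "B > 0" and B: "\<And>x. \<bar>f x\<bar> \<le> B"
    and "L > 0" and L: "\<And>x y. \<bar>f x - f y\<bar> \<le> L * \<bar>x - y\<bar>"
  show "cblip1 (\<lambda>x. f (r * x))"
  proof (rule cblip1I)
    show "\<bar>f (r * x)\<bar> \<le> B" for x by (rule B)
    show "\<bar>f (r * x) - f (r * y)\<bar> \<le> (L * \<bar>r\<bar>) * \<bar>x - y\<bar>" for x y
      using L[of "r * x" "r * y"] by (simp add: abs_mult mult.assoc flip: right_diff_distrib)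
  qed
qed

lemma min_scaled_abs_lipschitz:
  fixes R c x y :: real
  assumes "c \<ge> 0"
  shows "\<bar>min R (c * \<bar>x\<bar>) - min R (c * \<bar>y\<bar>)\<bar> \<le> c * \<bar>x - y\<bar>"
proof -
  have "\<bar>c * \<bar>x\<bar> - c * \<bar>y\<bar>\<bar> \<le> c * \<bar>x - y\<bar>"
    using mult_left_mono[OF abs_triangle_ineq3[of x y] assms] assms
    by (simp add: abs_mult flip: right_diff_distrib)
  then show ?thesis by (simp add: min_def abs_le_iff)
qed

lemma cblip1_min_scaled_abs: "R \<ge> 0 \<Longrightarrow> c \<ge> 0 \<Longrightarrow> cblip1 (\<lambda>x. min R (c * \<bar>x\<bar>))"
  by (rule cblip1I[of _ R c]) (auto simp: min_scaled_abs_lipschitz)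

lemma bdd_lipschitz_diff_le_min:
  fixes f :: "real \<Rightarrow> real"
  assumes "\<And>x. \<bar>f x\<bar> \<le> B" and "\<And>x y. \<bar>f x - f y\<bar> \<le> L * \<bar>x - y\<bar>"
  shows "\<bar>f x - f y\<bar> \<le> min (2 * B) (L * \<bar>x - y\<bar>)"
  using assms(1)[of x] assms(1)[of y] assms(2)[of x y] by linarith

definition bdd_lipschitz2 :: "(real \<Rightarrow> real \<Rightarrow> real) \<Rightarrow> bool" where
  "bdd_lipschitz2 \<phi> \<longleftrightarrow> (\<exists>B. \<forall>a b. \<bar>\<phi> a b\<bar> \<le> B) \<and>
     (\<exists>L. \<forall>a b a' b'. \<bar>\<phi> a b - \<phi> a' b'\<bar> \<le> L * (\<bar>a - a'\<bar> + \<bar>b - b'\<bar>))"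

lemma bdd_lipschitz2E:
  assumes "bdd_lipschitz2 \<phi>"
  obtains B L where "\<And>a b. \<bar>\<phi> a b\<bar> \<le> B" "L \<ge> 0"
    "\<And>a b a' b'. \<bar>\<phi> a b - \<phi> a' b'\<bar> \<le> L * (\<bar>a - a'\<bar> + \<bar>b - b'\<bar>)"
proof -
  obtain B L where B: "\<And>a b. \<bar>\<phi> a b\<bar> \<le> B"
    and L: "\<And>a b a' b'. \<bar>\<phi> a b - \<phi> a' b'\<bar> \<le> L * (\<bar>a - a'\<bar> + \<bar>b - b'\<bar>)"
    using assms unfolding bdd_lipschitz2_def by blast
  have "L \<ge> 0" using L[of 0 0 1 0] by auto
  then show thesis by (rule that[OF B _ L])
qed

lemma cblip1_bdd_lipschitz2_fst:
  assumes "bdd_lipschitz2 \<phi>"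
  shows "cblip1 (\<lambda>a. \<phi> a b)"
proof -
  obtain B L where "\<And>a b. \<bar>\<phi> a b\<bar> \<le> B" "L \<ge> 0"
    and L: "\<And>a b a' b'. \<bar>\<phi> a b - \<phi> a' b'\<bar> \<le> L * (\<bar>a - a'\<bar> + \<bar>b - b'\<bar>)"
    using assms by (rule bdd_lipschitz2E) blast
  moreover have "\<bar>\<phi> x b - \<phi> y b\<bar> \<le> L * \<bar>x - y\<bar>" for x y
    using L[of x b y b] by simp
  ultimately show ?thesis by (intro cblip1I[of _ B L])
qed

lemma bdd_lipschitz2_cblip1_fst: "cblip1 f \<Longrightarrow> bdd_lipschitz2 (\<lambda>a b. f a)"
proof (elim cblip1E)
  fix B L assume "B > 0" "\<And>x. \<bar>f x\<bar> \<le> B" "L > 0" and L: "\<And>x y. \<bar>f x - f y\<bar> \<le> L * \<bar>x - y\<bar>"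
  moreover have "L * \<bar>a - a'\<bar> \<le> L * (\<bar>a - a'\<bar> + \<bar>b - b'\<bar>)" for a a' b b' :: real
    using \<open>L > 0\<close> by (intro mult_left_mono) auto
  ultimately show "bdd_lipschitz2 (\<lambda>a b. f a)"
    unfolding bdd_lipschitz2_def by (meson order_trans)
qed

lemma bdd_lipschitz2_shift_snd: "bdd_lipschitz2 \<phi> \<Longrightarrow> bdd_lipschitz2 (\<lambda>x y. \<phi> a (b + y))"
proof (elim bdd_lipschitz2E)
  fix B L assume B: "\<And>a b. \<bar>\<phi> a b\<bar> \<le> B" and "L \<ge> 0"
    and L: "\<And>a b a' b'. \<bar>\<phi> a b - \<phi> a' b'\<bar> \<le> L * (\<bar>a - a'\<bar> + \<bar>b - b'\<bar>)"
  have "\<bar>\<phi> a (b + y) - \<phi> a (b + y')\<bar> \<le> L * (\<bar>x - x'\<bar> + \<bar>y - y'\<bar>)" for x x' y y' :: real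
    using L[of a "b + y" a "b + y'"] mult_left_mono[of "\<bar>y - y'\<bar>" "\<bar>x - x'\<bar> + \<bar>y - y'\<bar>" L] \<open>L \<ge> 0\<close>
    by simp
  with B show "bdd_lipschitz2 (\<lambda>x y. \<phi> a (b + y))"
    unfolding bdd_lipschitz2_def by blast
qed

lemma bdd_lipschitz2_mult:
  assumes "cblip1 u" "cblip1 v"
  shows "bdd_lipschitz2 (\<lambda>a b. u a * v b)"
proof -
  obtain Bu Lu where Bu: "Bu > 0" "\<And>x. \<bar>u x\<bar> \<le> Bu"
    and Lu: "Lu > 0" "\<And>x y. \<bar>u x - u y\<bar> \<le> Lu * \<bar>x - y\<bar>"
    using assms(1) by (rule cblip1E) blast
  obtain Bv Lv where Bv: "Bv > 0" "\<And>x. \<bar>v x\<bar> \<le> Bv"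
    and Lv: "Lv > 0" "\<And>x y. \<bar>v x - v y\<bar> \<le> Lv * \<bar>x - y\<bar>"
    using assms(2) by (rule cblip1E) blast
  have "\<bar>u a * v b\<bar> \<le> Bu * Bv" for a b
    unfolding abs_mult using Bu Bv by (intro mult_mono) auto
  moreover have "\<bar>u a * v b - u a' * v b'\<bar> \<le> (Bu * Lv + Bv * Lu) * (\<bar>a - a'\<bar> + \<bar>b - b'\<bar>)"
    for a b a' b'
  proof -
    have "\<bar>u a * v b - u a' * v b'\<bar> = \<bar>u a * (v b - v b') + v b' * (u a - u a')\<bar>"
      by (simp add: algebra_simps)
    also have "\<dots> \<le> \<bar>u a\<bar> * \<bar>v b - v b'\<bar> + \<bar>v b'\<bar> * \<bar>u a - u a'\<bar>"
      by (metis abs_mult abs_triangle_ineq)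
    also have "\<dots> \<le> Bu * (Lv * \<bar>b - b'\<bar>) + Bv * (Lu * \<bar>a - a'\<bar>)"
      using Bu Bv Lu Lv by (intro add_mono mult_mono) auto
    also have "\<dots> \<le> (Bu * Lv + Bv * Lu) * (\<bar>a - a'\<bar> + \<bar>b - b'\<bar>)"
      using Bu Bv Lu Lv by (simp add: algebra_simps)
    finally show ?thesis .
  qed
  ultimately show ?thesis unfolding bdd_lipschitz2_def by blast
qed

lemma nth_le_list_dist:
  assumes "k < length xs" "length ys = length xs"
  shows "\<bar>xs ! k - ys ! k\<bar> \<le> list_dist xs ys"
proof -
  have "(xs ! k - ys ! k)^2 \<le> (\<Sum>i<length xs. (xs ! i - ys ! i)^2)"
    using assms by (intro member_le_sum) auto
  then show ?thesis unfolding list_dist_def by (simp add: real_le_rsqrt)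
qed

locale sublinear_expectation =
  fixes M :: "'w measure" and H :: "('w \<Rightarrow> real) set" and E :: "('w \<Rightarrow> real) \<Rightarrow> real"
  assumes sublinear_space: "sublinear_space M H E"
begin

lemma H_add: "X \<in> H \<Longrightarrow> Y \<in> H \<Longrightarrow> (\<lambda>w. X w + Y w) \<in> H"
  and H_scale: "X \<in> H \<Longrightarrow> (\<lambda>w. c * X w) \<in> H"
  and H_comp: "set Xs \<subseteq> H \<Longrightarrow> cblip (length Xs) \<phi> \<Longrightarrow> (\<lambda>w. \<phi> (map (\<lambda>X. X w) Xs)) \<in> H"
  and E_mono: "X \<in> H \<Longrightarrow> Y \<in> H \<Longrightarrow> (\<And>w. X w \<le> Y w) \<Longrightarrow> E X \<le> E Y"
  and E_const [simp]: "E (\<lambda>_. c) = c"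
  and E_add_le: "X \<in> H \<Longrightarrow> Y \<in> H \<Longrightarrow> E (\<lambda>w. X w + Y w) \<le> E X + E Y"
  and E_scale: "X \<in> H \<Longrightarrow> c \<ge> 0 \<Longrightarrow> E (\<lambda>w. c * X w) = c * E X"
  using sublinear_space unfolding sublinear_space_def by simp_all

lemma H_const: "(\<lambda>_. c) \<in> H"
proof -
  have "cblip (length ([] :: ('w \<Rightarrow> real) list)) (\<lambda>_. c)"
    unfolding cblip_def by (intro conjI exI[of _ "\<bar>c\<bar>"] exI[of _ 0]) auto
  from H_comp[OF _ this] show ?thesis by simp
qed

lemma H_bdd_lipschitz2_comp:
  assumes "bdd_lipschitz2 \<phi>" "X \<in> H" "Y \<in> H"
  shows "(\<lambda>w. \<phi> (X w) (Y w)) \<in> H"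
proof -
  obtain B L where B: "\<And>a b. \<bar>\<phi> a b\<bar> \<le> B" and "L \<ge> 0"
    and L: "\<And>a b a' b'. \<bar>\<phi> a b - \<phi> a' b'\<bar> \<le> L * (\<bar>a - a'\<bar> + \<bar>b - b'\<bar>)"
    using assms(1) by (rule bdd_lipschitz2E) blast
  have "cblip (length [X, Y]) (\<lambda>xs. \<phi> (xs ! 0) (xs ! 1))"
    unfolding cblip_def
  proof (intro conjI exI allI impI)
    fix xs :: "real list" show "\<bar>\<phi> (xs ! 0) (xs ! 1)\<bar> \<le> B" by (rule B)
  next
    fix xs ys :: "real list" assume "length xs = length [X, Y]" "length ys = length [X, Y]"
    then have "\<bar>xs ! 0 - ys ! 0\<bar> + \<bar>xs ! 1 - ys ! 1\<bar> \<le> 2 * list_dist xs ys"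
      using nth_le_list_dist[of 0 xs ys] nth_le_list_dist[of 1 xs ys] by simp
    then have "L * (\<bar>xs ! 0 - ys ! 0\<bar> + \<bar>xs ! 1 - ys ! 1\<bar>) \<le> L * (2 * list_dist xs ys)"
      using \<open>L \<ge> 0\<close> by (rule mult_left_mono)
    then show "\<bar>\<phi> (xs ! 0) (xs ! 1) - \<phi> (ys ! 0) (ys ! 1)\<bar> \<le> (2 * L) * list_dist xs ys"
      using L[of "xs ! 0" "xs ! 1" "ys ! 0" "ys ! 1"] by (simp add: mult.assoc)
  qed
  from H_comp[OF _ this] assms(2,3) show ?thesis by simp
qed

lemma H_cblip1_comp: "cblip1 f \<Longrightarrow> X \<in> H \<Longrightarrow> (\<lambda>w. f (X w)) \<in> H"
  using H_bdd_lipschitz2_comp[OF bdd_lipschitz2_cblip1_fst, of f X X] by simp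

lemma H_sum: "finite A \<Longrightarrow> (\<And>k. k \<in> A \<Longrightarrow> Y k \<in> H) \<Longrightarrow> (\<lambda>w. \<Sum>k\<in>A. Y k w) \<in> H"
  by (induction A rule: finite_induct) (auto intro: H_add H_const)

lemma E_sum_le:
  "finite A \<Longrightarrow> (\<And>k. k \<in> A \<Longrightarrow> Y k \<in> H) \<Longrightarrow> E (\<lambda>w. \<Sum>k\<in>A. Y k w) \<le> (\<Sum>k\<in>A. E (Y k))"
proof (induction A rule: finite_induct)
  case (insert x F)
  then have "E (\<lambda>w. Y x w + (\<Sum>k\<in>F. Y k w)) \<le> E (Y x) + E (\<lambda>w. \<Sum>k\<in>F. Y k w)"
    by (intro E_add_le H_sum) auto
  with insert show ?case by simp
qed simp

lemma E_add_const: "X \<in> H \<Longrightarrow> E (\<lambda>w. X w + c) = E X + c"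
proof -
  assume X: "X \<in> H"
  have "E (\<lambda>w. X w + c) \<le> E X + c"
    using E_add_le[OF X H_const, of c] by simp
  moreover have "E X \<le> E (\<lambda>w. X w + c) - c"
    using E_add_le[OF H_add[OF X H_const] H_const, of c "-c"] by simp
  ultimately show ?thesis by linarith
qed

lemma E_abs_diff_le:
  assumes "X \<in> H" "Y \<in> H" "\<And>w. \<bar>X w - Y w\<bar> \<le> c"
  shows "\<bar>E X - E Y\<bar> \<le> c"
proof -
  have "X w \<le> Y w + c" "Y w \<le> X w + c" for w
    using assms(3)[of w] by linarith+
  then have "E X \<le> E (\<lambda>w. Y w + c)" "E Y \<le> E (\<lambda>w. X w + c)"
    using assms(1,2) by (auto intro!: E_mono H_add H_const)
  with assms(1,2) show ?thesis by (simp add: E_add_const abs_le_iff)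
qed

lemma E_abs_le: "X \<in> H \<Longrightarrow> (\<And>w. \<bar>X w\<bar> \<le> c) \<Longrightarrow> \<bar>E X\<bar> \<le> c"
  using E_abs_diff_le[OF _ H_const, of X 0 c] by simp

lemma E_nonneg: "X \<in> H \<Longrightarrow> (\<And>w. 0 \<le> X w) \<Longrightarrow> 0 \<le> E X"
  using E_mono[OF H_const, of X 0] by simp

lemma bdd_lipschitz2_E_shift_snd:
  assumes "bdd_lipschitz2 \<phi>" "Y \<in> H"
  shows "bdd_lipschitz2 (\<lambda>a b. E (\<lambda>w. \<phi> a (b + Y w)))"
proof -
  obtain B L where B: "\<And>a b. \<bar>\<phi> a b\<bar> \<le> B" and "L \<ge> 0"
    and L: "\<And>a b a' b'. \<bar>\<phi> a b - \<phi> a' b'\<bar> \<le> L * (\<bar>a - a'\<bar> + \<bar>b - b'\<bar>)"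
    using assms(1) by (rule bdd_lipschitz2E) blast
  have H: "(\<lambda>w. \<phi> a (b + Y w)) \<in> H" for a b
    using H_bdd_lipschitz2_comp[OF bdd_lipschitz2_shift_snd[OF assms(1)] assms(2) assms(2)] .
  have "\<bar>E (\<lambda>w. \<phi> a (b + Y w))\<bar> \<le> B" for a b
    using E_abs_le[OF H B] .
  moreover have "\<bar>E (\<lambda>w. \<phi> a (b + Y w)) - E (\<lambda>w. \<phi> a' (b' + Y w))\<bar> \<le> L * (\<bar>a - a'\<bar> + \<bar>b - b'\<bar>)"
    for a b a' b'
  proof (rule E_abs_diff_le[OF H H])
    show "\<bar>\<phi> a (b + Y w) - \<phi> a' (b' + Y w)\<bar> \<le> L * (\<bar>a - a'\<bar> + \<bar>b - b'\<bar>)" for w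
      using L[of a "b + Y w" a' "b' + Y w"] by simp
  qed
  ultimately show ?thesis unfolding bdd_lipschitz2_def by blast
qed

lemma E_sum_mult_sum_le:
  assumes "finite I" "finite J" "\<And>i. i \<in> I \<Longrightarrow> a i \<ge> 0" "\<And>j. j \<in> J \<Longrightarrow> b j \<ge> 0"
    and "\<And>i j. i \<in> I \<Longrightarrow> j \<in> J \<Longrightarrow> (\<lambda>w. X i w * Y j w) \<in> H"
    and "\<And>i j. i \<in> I \<Longrightarrow> j \<in> J \<Longrightarrow> E (\<lambda>w. X i w * Y j w) \<le> R"
  shows "E (\<lambda>w. (\<Sum>i\<in>I. a i * X i w) * (\<Sum>j\<in>J. b j * Y j w)) \<le> R * (\<Sum>i\<in>I. a i) * (\<Sum>j\<in>J. b j)"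
proof -
  have H: "(\<lambda>w. (a i * b j) * (X i w * Y j w)) \<in> H" if "i \<in> I" "j \<in> J" for i j
    using that assms(5) by (intro H_scale)
  have "E (\<lambda>w. (\<Sum>i\<in>I. a i * X i w) * (\<Sum>j\<in>J. b j * Y j w))
      = E (\<lambda>w. \<Sum>i\<in>I. \<Sum>j\<in>J. (a i * b j) * (X i w * Y j w))"
    unfolding sum_product by (simp only: mult_ac)
  also have "\<dots> \<le> (\<Sum>i\<in>I. E (\<lambda>w. \<Sum>j\<in>J. (a i * b j) * (X i w * Y j w)))"
    using assms(1,2) H by (intro E_sum_le H_sum) auto
  also have "\<dots> \<le> (\<Sum>i\<in>I. \<Sum>j\<in>J. E (\<lambda>w. (a i * b j) * (X i w * Y j w)))"
    using assms(2) H by (intro sum_mono E_sum_le) auto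
  also have "\<dots> = (\<Sum>i\<in>I. \<Sum>j\<in>J. (a i * b j) * E (\<lambda>w. X i w * Y j w))"
    using assms(3-5) by (intro sum.cong refl E_scale) auto
  also have "\<dots> \<le> (\<Sum>i\<in>I. \<Sum>j\<in>J. (a i * b j) * R)"
    using assms(3,4,6) by (intro sum_mono mult_left_mono) auto
  also have "\<dots> = R * ((\<Sum>i\<in>I. a i) * (\<Sum>j\<in>J. b j))"
    by (simp add: sum_distrib_left sum_distrib_right mult_ac sum.swap[of _ J])
  finally show ?thesis by (simp only: mult.assoc)
qed

end

section \<open>Independent increments of partial sums\<close>

text \<open>\<open>split_sums \<phi> i\<close> presents \<open>\<phi>(S\<^sub>i, S\<^sub>j - S\<^sub>i + x)\<close> as a function of the vector
  \<open>(X\<^sub>1, \<dots>, X\<^sub>j, x)\<close>, the form in which \<open>indep_seq\<close> speaks about independence.\<close>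

definition split_sums :: "(real \<Rightarrow> real \<Rightarrow> real) \<Rightarrow> nat \<Rightarrow> real list \<Rightarrow> real" where
  "split_sums \<phi> i zs = \<phi> (\<Sum>k<i. zs ! k) (\<Sum>k\<in>{i..<length zs}. zs ! k)"

lemma cblip_split_sums:
  assumes "bdd_lipschitz2 \<phi>" "i \<le> n"
  shows "cblip n (split_sums \<phi> i)"
proof -
  obtain B L where B: "\<And>a b. \<bar>\<phi> a b\<bar> \<le> B" and "L \<ge> 0"
    and L: "\<And>a b a' b'. \<bar>\<phi> a b - \<phi> a' b'\<bar> \<le> L * (\<bar>a - a'\<bar> + \<bar>b - b'\<bar>)"
    using assms(1) by (rule bdd_lipschitz2E) blast
  show ?thesis unfolding cblip_def
  proof (intro conjI exI allI impI)
    fix xs :: "real list" show "\<bar>split_sums \<phi> i xs\<bar> \<le> B" unfolding split_sums_def by (rule B)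
  next
    fix xs ys :: "real list" assume len: "length xs = n" "length ys = n"
    have "\<bar>(\<Sum>k<i. xs ! k) - (\<Sum>k<i. ys ! k)\<bar> + \<bar>(\<Sum>k\<in>{i..<n}. xs ! k) - (\<Sum>k\<in>{i..<n}. ys ! k)\<bar>
        \<le> (\<Sum>k<i. \<bar>xs ! k - ys ! k\<bar>) + (\<Sum>k\<in>{i..<n}. \<bar>xs ! k - ys ! k\<bar>)"
      by (intro add_mono) (simp_all add: sum_subtractf[symmetric] sum_abs)
    also have "\<dots> = (\<Sum>k<n. \<bar>xs ! k - ys ! k\<bar>)"
      using assms(2) by (simp add: atLeast0LessThan[symmetric] sum.atLeastLessThan_concat)
    also have "\<dots> \<le> real n * list_dist xs ys"
      using sum_mono[of "{..<n}" "\<lambda>k. \<bar>xs ! k - ys ! k\<bar>" "\<lambda>_. list_dist xs ys"]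
        nth_le_list_dist[of _ xs ys] len by simp
    finally have "L * (\<bar>(\<Sum>k<i. xs ! k) - (\<Sum>k<i. ys ! k)\<bar>
        + \<bar>(\<Sum>k\<in>{i..<n}. xs ! k) - (\<Sum>k\<in>{i..<n}. ys ! k)\<bar>) \<le> L * (real n * list_dist xs ys)"
      using \<open>L \<ge> 0\<close> by (rule mult_left_mono)
    moreover have "\<bar>split_sums \<phi> i xs - split_sums \<phi> i ys\<bar> \<le> L * (\<bar>(\<Sum>k<i. xs ! k) - (\<Sum>k<i. ys ! k)\<bar>
        + \<bar>(\<Sum>k\<in>{i..<n}. xs ! k) - (\<Sum>k\<in>{i..<n}. ys ! k)\<bar>)"
      unfolding split_sums_def len by (rule L)
    ultimately show "\<bar>split_sums \<phi> i xs - split_sums \<phi> i ys\<bar> \<le> (L * real n) * list_dist xs ys"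
      by (simp add: mult.assoc)
  qed
qed

lemma Sn_conv_lessThan: "Sn X n w = (\<Sum>k<n. X (Suc k) w)"
  unfolding Sn_def using sum.atLeast1_atMost_eq[of "\<lambda>k. X k w" n] by simp

lemma Sn_Suc: "Sn X (Suc n) w = Sn X n w + X (Suc n) w"
  unfolding Sn_conv_lessThan by simp

lemma split_sums_partial_sums:
  assumes "i \<le> j"
  shows "split_sums \<phi> i (map (\<lambda>Y. Y w) (map X [1..<j+1]) @ [y])
    = \<phi> (Sn X i w) (Sn X j w - Sn X i w + y)"
proof -
  let ?zs = "map (\<lambda>Y. Y w) (map X [1..<j+1]) @ [y]"
  have nth: "?zs ! k = X (Suc k) w" if "k < j" for k
    using that by (simp add: nth_append del: upt_Suc)
  have zs_j: "?zs ! j = y"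
    using nth_append_length[of "map (\<lambda>Y. Y w) (map X [1..<j+1])" y "[]"] by (simp del: upt_Suc)
  have len: "length ?zs = Suc j"
    by (simp del: upt_Suc)
  have "(\<Sum>k<i. ?zs ! k) = Sn X i w"
    unfolding Sn_conv_lessThan using assms by (intro sum.cong refl nth) auto
  moreover have "(\<Sum>k\<in>{i..<length ?zs}. ?zs ! k) = (\<Sum>k\<in>{i..<j}. ?zs ! k) + y"
    by (simp only: len zs_j sum.atLeastLessThan_Suc[OF assms])
  moreover have "(\<Sum>k\<in>{i..<j}. ?zs ! k) = (\<Sum>k\<in>{i..<j}. X (Suc k) w)"
    by (intro sum.cong refl nth) auto
  moreover have "(\<Sum>k\<in>{i..<j}. X (Suc k) w) = Sn X j w - Sn X i w"
    unfolding Sn_conv_lessThan using sum.atLeastLessThan_concat[of 0 i j "\<lambda>k. X (Suc k) w"] assms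
    by (simp add: atLeast0LessThan)
  ultimately show ?thesis unfolding split_sums_def by simp
qed

locale indep_sequence = sublinear_expectation +
  fixes X :: "nat \<Rightarrow> 'w \<Rightarrow> real"
  assumes indep: "indep_seq E X" and H_X: "\<And>i. i \<ge> 1 \<Longrightarrow> X i \<in> H"
begin

lemma H_Sn: "Sn X n \<in> H"
  unfolding Sn_def by (intro H_sum H_X) auto

lemma H_Sn_diff: "(\<lambda>w. Sn X j w - Sn X i w) \<in> H"
  using H_add[OF H_Sn H_scale[OF H_Sn, of "-1"]] by simp

lemma E_indep_next:
  assumes "bdd_lipschitz2 \<phi>" "1 \<le> i" "i \<le> j"
  shows "E (\<lambda>w. \<phi> (Sn X i w) (Sn X j w - Sn X i w + X (j+1) w)) =
         E (\<lambda>w. E (\<lambda>v. \<phi> (Sn X i w) (Sn X j w - Sn X i w + X (j+1) v)))"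
proof -
  have "indep_of E [X (j+1)] (map X [1..<j+1])"
    using indep assms(2,3) unfolding indep_seq_def by auto
  then have "cblip (length (map X [1..<j+1]) + length [X (j+1)]) (split_sums \<phi> i) \<longrightarrow>
     E (\<lambda>w. split_sums \<phi> i (map (\<lambda>Y. Y w) (map X [1..<j+1]) @ map (\<lambda>Y. Y w) [X (j+1)])) =
     E (\<lambda>w. E (\<lambda>v. split_sums \<phi> i (map (\<lambda>Y. Y w) (map X [1..<j+1]) @ map (\<lambda>Y. Y v) [X (j+1)])))"
    unfolding indep_of_def by blast
  moreover have "cblip (length (map X [1..<j+1]) + length [X (j+1)]) (split_sums \<phi> i)"
    using assms by (intro cblip_split_sums) auto
  ultimately show ?thesis by (simp only: list.map split_sums_partial_sums[OF assms(3)])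
qed

lemma E_indep_increment:
  assumes "bdd_lipschitz2 \<phi>" "1 \<le> i" "i \<le> j"
  shows "E (\<lambda>w. \<phi> (Sn X i w) (Sn X j w - Sn X i w)) =
         E (\<lambda>w. E (\<lambda>v. \<phi> (Sn X i w) (Sn X j v - Sn X i v)))"
  using assms(3,1)
proof (induction j arbitrary: \<phi> rule: dec_induct)
  case (step n)
  define \<psi> where "\<psi> a b = E (\<lambda>v. \<phi> a (b + X (n+1) v))" for a b
  have \<psi>: "bdd_lipschitz2 \<psi>"
    unfolding \<psi>_def using step.prems H_X by (intro bdd_lipschitz2_E_shift_snd) auto
  have \<psi>_eq: "E (\<lambda>v. \<psi> a (Sn X n v - Sn X i v)) = E (\<lambda>v. \<phi> a (Sn X n v - Sn X i v + X (n+1) v))"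
    for a
    using E_indep_next[OF bdd_lipschitz2_shift_snd[OF step.prems, of a 0] assms(2) step.hyps(1)]
    unfolding \<psi>_def by simp
  have "E (\<lambda>w. \<phi> (Sn X i w) (Sn X (Suc n) w - Sn X i w))
      = E (\<lambda>w. \<phi> (Sn X i w) (Sn X n w - Sn X i w + X (n+1) w))"
    by (simp add: Sn_Suc algebra_simps)
  also have "\<dots> = E (\<lambda>w. \<psi> (Sn X i w) (Sn X n w - Sn X i w))"
    unfolding \<psi>_def using E_indep_next[OF step.prems assms(2) step.hyps(1)] .
  also have "\<dots> = E (\<lambda>w. E (\<lambda>v. \<psi> (Sn X i w) (Sn X n v - Sn X i v)))"
    using step.IH[OF \<psi>] .
  also have "\<dots> = E (\<lambda>w. E (\<lambda>v. \<phi> (Sn X i w) (Sn X (Suc n) v - Sn X i v)))"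
    by (simp add: \<psi>_eq Sn_Suc algebra_simps)
  finally show ?case .
qed simp

text \<open>Conditioning on \<open>S\<^sub>i = a\<close> by independence, positive homogeneity gives
  \<open>E[u(a) v] = u(a) E[v]\<close> or \<open>(-u(a)) E[-v]\<close> according to the sign of \<open>u(a)\<close>; so one-sided
  bounds on \<open>E[v]\<close> and \<open>E[-v]\<close> suffice.\<close>

lemma E_mult_indep_increment_le:
  assumes "1 \<le> i" "i \<le> j" "cblip1 u" "cblip1 v" "\<And>a. \<bar>u a\<bar> \<le> K"
    and v_le: "E (\<lambda>w. v (Sn X j w - Sn X i w)) \<le> \<delta>"
    and neg_v_le: "E (\<lambda>w. - v (Sn X j w - Sn X i w)) \<le> \<delta>"
  shows "E (\<lambda>w. u (Sn X i w) * v (Sn X j w - Sn X i w)) \<le> K * \<delta>"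
proof -
  define V where "V w = Sn X j w - Sn X i w" for w
  have vV: "(\<lambda>w. v (V w)) \<in> H" "(\<lambda>w. - v (V w)) \<in> H"
    unfolding V_def using H_Sn_diff H_cblip1_comp assms(4) cblip1_affine[OF assms(4), of "-1" 0]
    by auto
  have "0 \<le> E (\<lambda>w. v (V w) + - v (V w))" by simp
  also have "\<dots> \<le> 2 * \<delta>" using E_add_le[OF vV] v_le neg_v_le unfolding V_def by linarith
  finally have "0 \<le> \<delta>" by simp
  define h where "h a = E (\<lambda>w. u a * v (V w))" for a
  have "cblip1 (\<lambda>a. E (\<lambda>w. u a * v (0 + V w)))"
    unfolding V_def
    by (intro cblip1_bdd_lipschitz2_fst bdd_lipschitz2_E_shift_snd bdd_lipschitz2_mult assms H_Sn_diff)
  then have h: "cblip1 h" unfolding h_def by simp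
  have "h a \<le> K * \<delta>" for a
  proof (cases "u a \<ge> 0")
    case True
    then have "h a = u a * E (\<lambda>w. v (V w))" unfolding h_def by (rule E_scale[OF vV(1)])
    also have "\<dots> \<le> \<bar>u a\<bar> * \<delta>" using True v_le unfolding V_def by (simp add: mult_left_mono)
    finally show ?thesis using mult_right_mono[OF assms(5)[of a] \<open>0 \<le> \<delta>\<close>] by linarith
  next
    case False
    then have "h a = - u a * E (\<lambda>w. - v (V w))"
      unfolding h_def using E_scale[OF vV(2), of "- u a"] by simp
    also have "\<dots> \<le> \<bar>u a\<bar> * \<delta>" using False neg_v_le unfolding V_def by (simp add: mult_left_mono)
    finally show ?thesis using mult_right_mono[OF assms(5)[of a] \<open>0 \<le> \<delta>\<close>] by linarith
  qed
  then have "E (\<lambda>w. h (Sn X i w)) \<le> K * \<delta>"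
    using E_mono[OF H_cblip1_comp[OF h H_Sn] H_const] by simp
  moreover have "E (\<lambda>w. u (Sn X i w) * v (V w)) = E (\<lambda>w. h (Sn X i w))"
    unfolding h_def V_def
    using E_indep_increment[OF bdd_lipschitz2_mult[OF assms(3,4)] assms(1,2)] .
  ultimately show ?thesis unfolding V_def by simp
qed

end

lemma (in sublinear_expectation) standing_sigm_bounds:
  assumes "standing H E \<beta> X" "\<beta> \<ge> 1"
  obtains c0 C0 where "c0 > 0" "\<And>i. i \<ge> 1 \<Longrightarrow> sqrt c0 \<le> sigm E X i"
    "\<And>i. i \<ge> 1 \<Longrightarrow> sigm E X i \<le> sqrt C0"
proof -
  have "\<exists>c>0. \<forall>i\<ge>1. c \<le> (sig_lo E X i)^2" "\<exists>C. \<forall>i\<ge>1. (sig_up E X i)^2 \<le> C"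
    and ratio: "\<forall>i\<ge>1. sig_up E X i / sig_lo E X i = \<beta>"
    and H_X_sq: "\<forall>i\<ge>1. (\<lambda>w. (X i w)^2) \<in> H"
    using assms(1) unfolding standing_def by simp_all
  then obtain c0 C0 where "c0 > 0" and lo: "\<forall>i\<ge>1. c0 \<le> (sig_lo E X i)^2"
    and up: "\<forall>i\<ge>1. (sig_up E X i)^2 \<le> C0"
    by blast
  have "sqrt c0 \<le> sigm E X i \<and> sigm E X i \<le> sqrt C0" if "i \<ge> 1" for i
  proof -
    have "E (\<lambda>w. - ((X i w)^2)) \<le> E (\<lambda>_. 0)"
      using H_scale[of "\<lambda>w. (X i w)^2" "-1"] H_X_sq that by (intro E_mono H_const) auto
    then have "sig_lo E X i \<ge> 0" unfolding sig_lo_def by simp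
    then have lo_ge: "sqrt c0 \<le> sig_lo E X i"
      using real_sqrt_le_mono[of c0 "(sig_lo E X i)^2"] lo that by simp
    then have "sig_lo E X i > 0" using \<open>c0 > 0\<close> by (meson less_le_trans real_sqrt_gt_zero)
    moreover have "sig_up E X i = \<beta> * sig_lo E X i"
      using ratio that \<open>sig_lo E X i > 0\<close> by (simp add: divide_eq_eq)
    ultimately have "sig_lo E X i \<le> sig_up E X i"
      using mult_right_mono[OF assms(2), of "sig_lo E X i"] by simp
    moreover have "sig_up E X i \<le> sqrt C0"
      using up that by (simp add: real_le_rsqrt)
    ultimately show ?thesis using lo_ge unfolding sigm_def by simp
  qed
  with \<open>c0 > 0\<close> show thesis by (intro that[of c0 C0]) auto
qed

lemma Bn_bounds:
  assumes "c0 > 0" "\<And>i. i \<ge> 1 \<Longrightarrow> sqrt c0 \<le> sigm E X i" "\<And>i. i \<ge> 1 \<Longrightarrow> sigm E X i \<le> sqrt C0"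
  shows "sqrt (c0 * n) \<le> Bn E X n" and "Bn E X n \<le> sqrt (C0 * n)"
proof -
  have "c0 \<le> (sigm E X i)^2 \<and> (sigm E X i)^2 \<le> C0" if "i \<in> {1..n}" for i
  proof -
    have lower: "sqrt c0 \<le> sigm E X i" and upper: "sigm E X i \<le> sqrt C0"
      using that assms(2,3) by auto
    have "0 \<le> sqrt c0" using assms(1) by simp
    then have "0 \<le> sigm E X i" using lower by linarith
    with \<open>0 \<le> sqrt c0\<close> have "(sqrt c0)^2 \<le> (sigm E X i)^2" "(sigm E X i)^2 \<le> (sqrt C0)^2"
      using power_mono[OF lower, of 2] power_mono[OF upper, of 2] by simp_all
    moreover have "sqrt c0 \<le> sqrt C0"
      using lower upper by linarith
    then have "c0 \<le> C0" by simp
    ultimately show ?thesis using assms(1) by simp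
  qed
  then have "real n * c0 \<le> (\<Sum>i=1..n. (sigm E X i)^2)" "(\<Sum>i=1..n. (sigm E X i)^2) \<le> real n * C0"
    using sum_mono[of "{1..n}" "\<lambda>_. c0" "\<lambda>i. (sigm E X i)^2"]
      sum_mono[of "{1..n}" "\<lambda>i. (sigm E X i)^2" "\<lambda>_. C0"] by simp_all
  then show "sqrt (c0 * n) \<le> Bn E X n" "Bn E X n \<le> sqrt (C0 * n)"
    unfolding Bn_def by (simp_all add: mult.commute)
qed

text \<open>In Song's error term the powers of \<open>\<sigma>\<^sub>i\<close> cancel down to \<open>\<sigma>\<^sub>i\<^sup>-\<^sup>2\<close>, so only
  the lower bounds on \<open>\<sigma>\<^sub>i\<close> and \<open>B\<^sub>n\<close> matter.\<close>

lemma song_error_le: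
  assumes c0: "c0 > 0" and sigm_lower: "\<And>i. i \<ge> 1 \<Longrightarrow> sqrt c0 \<le> sigm E X i"
    and Bn_lower: "sqrt (c0 * n) \<le> Bn E X n" and "n \<ge> 1"
    and moment: "\<And>i. i \<ge> 1 \<Longrightarrow> E (\<lambda>w. \<bar>X i w\<bar> powr (2 + \<alpha>)) \<le> K"
    and "K \<ge> 0" "\<alpha> \<ge> 0"
  shows "Max ((\<lambda>i. E (\<lambda>w. \<bar>X i w\<bar> powr (2 + \<alpha>)) / sigm E X i powr (2 + \<alpha>)
                   * (sigm E X i / Bn E X n) powr \<alpha>) ` {1..n})
     \<le> K / c0 powr (1 + \<alpha> / 2) * real n powr (- \<alpha> / 2)"
proof (rule Max.boundedI)
  show "(\<lambda>i. E (\<lambda>w. \<bar>X i w\<bar> powr (2 + \<alpha>)) / sigm E X i powr (2 + \<alpha>)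
                   * (sigm E X i / Bn E X n) powr \<alpha>) ` {1..n} \<noteq> {}"
    using \<open>n \<ge> 1\<close> by simp
  fix y assume "y \<in> (\<lambda>i. E (\<lambda>w. \<bar>X i w\<bar> powr (2 + \<alpha>)) / sigm E X i powr (2 + \<alpha>)
                   * (sigm E X i / Bn E X n) powr \<alpha>) ` {1..n}"
  then obtain i where i: "i \<ge> 1" and y: "y = E (\<lambda>w. \<bar>X i w\<bar> powr (2 + \<alpha>)) / sigm E X i powr (2 + \<alpha>)
                   * (sigm E X i / Bn E X n) powr \<alpha>" by auto
  define \<sigma> where "\<sigma> = sigm E X i"
  define b where "b = Bn E X n"
  have "0 < sqrt c0" using c0 by simp
  then have \<sigma>: "\<sigma> > 0" "c0 \<le> \<sigma>^2"
    using less_le_trans[OF _ sigm_lower[OF i]] power_mono[OF sigm_lower[OF i], of 2] c0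
    unfolding \<sigma>_def by simp_all
  have "0 < sqrt (c0 * n)" using c0 \<open>n \<ge> 1\<close> by simp
  then have "b > 0" using Bn_lower unfolding b_def by linarith
  have "sqrt (c0 * n) powr \<alpha> = (c0 * n) powr (\<alpha> / 2)"
    using c0 by (simp add: powr_half_sqrt[symmetric] powr_powr)
  then have "(c0 * n) powr (\<alpha> / 2) \<le> b powr \<alpha>"
    using powr_mono2[OF \<open>\<alpha> \<ge> 0\<close> _ Bn_lower] c0 unfolding b_def by simp
  note b = \<open>b > 0\<close> this
  have "y = E (\<lambda>w. \<bar>X i w\<bar> powr (2 + \<alpha>)) / (\<sigma>^2 * b powr \<alpha>)"
    unfolding y \<sigma>_def[symmetric] b_def[symmetric] using \<sigma> b
    by (simp add: powr_add powr_divide)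
  also have "\<dots> \<le> K / (\<sigma>^2 * b powr \<alpha>)"
    using moment[OF i] \<sigma> b by (intro divide_right_mono) auto
  also have "\<dots> \<le> K / (c0 * (c0 * n) powr (\<alpha> / 2))"
    using \<sigma> b c0 \<open>n \<ge> 1\<close> \<open>K \<ge> 0\<close> by (intro divide_left_mono mult_mono mult_pos_pos) auto
  also have "\<dots> = K / c0 powr (1 + \<alpha> / 2) * real n powr (- \<alpha> / 2)"
    using c0 by (simp add: powr_mult powr_add powr_minus_divide)
  finally show "y \<le> K / c0 powr (1 + \<alpha> / 2) * real n powr (- \<alpha> / 2)" .
qed simp

section \<open>Blocks of indices between powers of four\<close>

lemma sqrt_four_power: "sqrt (4 ^ n) = (2 :: real) ^ n"
proof -
  have "(4 :: real) ^ n = (2 ^ n)^2"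
    by (simp add: power_mult_distrib[symmetric] power2_eq_square)
  then show ?thesis by simp
qed

lemma harmonic_block_le:
  assumes "1 \<le> l"
  shows "(\<Sum>i\<in>{4^(l-1)..<4^l}. 1 / real i) \<le> 3"
proof -
  define n where "n = (4::nat) ^ (l - 1)"
  have "n \<ge> 1" unfolding n_def by simp
  have "(4::nat) ^ l = 4 * n"
    unfolding n_def using assms by (metis Suc_diff_le diff_Suc_1 power_Suc)
  have "(\<Sum>i\<in>{n..<4 * n}. 1 / real i) \<le> card {n..<4 * n} * (1 / real n)"
    using \<open>n \<ge> 1\<close> by (intro sum_bounded_above divide_left_mono) auto
  also have "\<dots> = 3" using \<open>n \<ge> 1\<close> by simp
  finally show ?thesis unfolding \<open>4 ^ l = 4 * n\<close> n_def .
qed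

lemma rate_block_le:
  assumes "1 \<le> m" "4 ^ (m - 1) \<le> j" "\<alpha> \<ge> 0"
  shows "real j powr (- \<alpha> / 2) \<le> 2 powr (\<alpha> * (1 - real m))"
proof -
  have "(2::real) powr (2 * (real m - 1)) = (2 powr 2) powr real (m - 1)"
    unfolding powr_powr using assms(1) by (simp add: of_nat_diff)
  also have "\<dots> = 4 ^ (m - 1)"
    by (simp add: powr_realpow)
  also have "\<dots> \<le> real j"
    using assms(2) by (metis of_nat_le_iff of_nat_numeral of_nat_power)
  finally have "real j powr (- \<alpha> / 2) \<le> (2 powr (2 * (real m - 1))) powr (- \<alpha> / 2)"
    using assms(3) by (intro powr_mono2') auto
  also have "\<dots> = 2 powr (\<alpha> * (1 - real m))"
    by (simp add: powr_powr algebra_simps)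
  finally show ?thesis .
qed

section \<open>Consequences of a rate in the central limit theorem\<close>

locale clt_rate = indep_sequence M H E X + E': sublinear_expectation M' H' E'
  for M :: "'w measure" and H E X and M' :: "'v measure" and H' E' +
  fixes \<xi> :: "'v \<Rightarrow> real" and c0 C0 \<alpha> D :: real
  assumes H'_xi: "\<xi> \<in> H'" and H'_xi_sq: "(\<lambda>w. (\<xi> w)^2) \<in> H'"
    and c0_pos: "c0 > 0"
    and Bn_lower: "\<And>n. sqrt (c0 * n) \<le> Bn E X n"
    and Bn_upper: "\<And>n. Bn E X n \<le> sqrt (C0 * n)"
    and alpha_pos: "\<alpha> > 0" and D_pos: "D > 0"
    and rate: "\<And>n g. n \<ge> 1 \<Longrightarrow> cblip1 g \<Longrightarrow> (\<And>x y. \<bar>g x - g y\<bar> \<le> \<bar>x - y\<bar>) \<Longrightarrow>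
      \<bar>E (\<lambda>w. g (Wn E X n w)) - E' (\<lambda>w. g (\<xi> w))\<bar> \<le> D * real n powr (- \<alpha> / 2)"
begin

lemma Bn_pos:
  assumes "n \<ge> 1"
  shows "Bn E X n > 0"
proof -
  have "0 < sqrt (c0 * n)" using assms c0_pos by simp
  then show ?thesis using Bn_lower[of n] by linarith
qed

lemma c0_le_C0: "c0 \<le> C0"
proof -
  have "sqrt c0 \<le> sqrt C0" using order_trans[OF Bn_lower[of 1] Bn_upper[of 1]] by simp
  then show ?thesis by simp
qed

lemma H_Wn: "Wn E X n \<in> H"
  unfolding Wn_def using H_scale[OF H_Sn, of "1 / Bn E X n"] by simp

lemma rate_le_one: "n \<ge> 1 \<Longrightarrow> real n powr (- \<alpha> / 2) \<le> 1"
  using powr_mono2'[of "- \<alpha> / 2" 1 "real n"] alpha_pos by simp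

lemma rate_lipschitz:
  assumes "n \<ge> 1" "cblip1 g" "L > 0" "\<And>x y. \<bar>g x - g y\<bar> \<le> L * \<bar>x - y\<bar>"
  shows "\<bar>E (\<lambda>w. g (Wn E X n w)) - E' (\<lambda>w. g (\<xi> w))\<bar> \<le> L * D * real n powr (- \<alpha> / 2)"
proof -
  have "\<bar>(1 / L) * g x - (1 / L) * g y\<bar> \<le> \<bar>x - y\<bar>" for x y
    using assms(3) assms(4)[of x y] by (simp add: abs_mult flip: right_diff_distrib) (simp add: field_simps)
  then have "\<bar>E (\<lambda>w. (1 / L) * g (Wn E X n w)) - E' (\<lambda>w. (1 / L) * g (\<xi> w))\<bar>
      \<le> D * real n powr (- \<alpha> / 2)"
    using rate[OF assms(1) cblip1_affine[OF assms(2), of "1 / L" 0]] by simp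
  moreover have "E (\<lambda>w. (1 / L) * g (Wn E X n w)) = (1 / L) * E (\<lambda>w. g (Wn E X n w))"
    using assms(3) by (intro E_scale H_cblip1_comp[OF assms(2) H_Wn]) simp
  moreover have "E' (\<lambda>w. (1 / L) * g (\<xi> w)) = (1 / L) * E' (\<lambda>w. g (\<xi> w))"
    using assms(3) by (intro E'.E_scale E'.H_cblip1_comp[OF assms(2) H'_xi]) simp
  ultimately show ?thesis
    using assms(3) by (simp add: abs_mult flip: right_diff_distrib) (simp add: field_simps)
qed

lemma E'_min_scaled_abs_xi_le:
  assumes "R \<ge> 0" "\<rho> \<ge> 0"
  shows "E' (\<lambda>w. min R (\<rho> * \<bar>\<xi> w\<bar>)) \<le> \<rho> * (1 + E' (\<lambda>w. (\<xi> w)^2))"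
proof -
  have "\<bar>x\<bar> \<le> x^2 + 1" for x :: real
    using zero_le_power2[of "\<bar>x\<bar> - 1"] by (simp add: power2_eq_square algebra_simps)
  then have "min R (\<rho> * \<bar>x\<bar>) \<le> \<rho> * ((x^2) + 1)" for x :: real
    using mult_left_mono[OF _ assms(2)] by (meson min.coboundedI2)
  moreover have "(\<lambda>w. min R (\<rho> * \<bar>\<xi> w\<bar>)) \<in> H'"
    using E'.H_cblip1_comp[OF cblip1_min_scaled_abs[OF assms] H'_xi] .
  moreover have "(\<lambda>w. \<rho> * ((\<xi> w)^2 + 1)) \<in> H'"
    using E'.H_scale[OF E'.H_add[OF H'_xi_sq E'.H_const]] .
  ultimately have "E' (\<lambda>w. min R (\<rho> * \<bar>\<xi> w\<bar>)) \<le> E' (\<lambda>w. \<rho> * ((\<xi> w)^2 + 1))"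
    using E'.E_mono by blast
  also have "\<dots> = \<rho> * (1 + E' (\<lambda>w. (\<xi> w)^2))"
    using assms(2) E'.E_scale[OF E'.H_add[OF H'_xi_sq E'.H_const]] E'.E_add_const[OF H'_xi_sq]
    by simp
  finally show ?thesis .
qed

lemma E_min_scaled_abs_Wn_le:
  assumes "n \<ge> 1" "\<rho> > 0" "R \<ge> 0"
  shows "E (\<lambda>w. min R (\<rho> * \<bar>Wn E X n w\<bar>)) \<le> \<rho> * (1 + E' (\<lambda>w. (\<xi> w)^2) + D)"
proof -
  have "\<bar>E (\<lambda>w. min R (\<rho> * \<bar>Wn E X n w\<bar>)) - E' (\<lambda>w. min R (\<rho> * \<bar>\<xi> w\<bar>))\<bar>
      \<le> \<rho> * D * real n powr (- \<alpha> / 2)"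
    using assms by (intro rate_lipschitz cblip1_min_scaled_abs min_scaled_abs_lipschitz) auto
  moreover have "\<rho> * D * real n powr (- \<alpha> / 2) \<le> \<rho> * D"
    using rate_le_one[OF assms(1)] assms(2) D_pos by (simp add: mult_left_le)
  moreover have "E' (\<lambda>w. min R (\<rho> * \<bar>\<xi> w\<bar>)) \<le> \<rho> * (1 + E' (\<lambda>w. (\<xi> w)^2))"
    using E'_min_scaled_abs_xi_le[OF assms(3)] assms(2) by simp
  ultimately show ?thesis by (simp add: algebra_simps)
qed

lemma Bn_ratio_le:
  assumes "1 \<le> i" "i < 4 ^ l" "1 \<le> m" "4 ^ (m - 1) \<le> j"
  shows "Bn E X i / Bn E X j \<le> 2 * sqrt (C0 / c0) * 2 powr (real l - real m)"
proof -
  have "real i \<le> real (4 ^ l)" "real (4 ^ (m - 1)) \<le> real j"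
    using assms(2,4) by simp_all
  then have "sqrt (real i) \<le> 2 ^ l" "2 ^ (m - 1) \<le> sqrt (real j)"
    using real_sqrt_le_mono sqrt_four_power by (metis of_nat_numeral of_nat_power)+
  have upper: "Bn E X i \<le> sqrt C0 * 2 ^ l"
  proof -
    have "Bn E X i \<le> sqrt C0 * sqrt (real i)"
      using Bn_upper[of i] by (simp add: real_sqrt_mult)
    also have "\<dots> \<le> sqrt C0 * 2 ^ l"
      using \<open>sqrt (real i) \<le> 2 ^ l\<close> c0_pos c0_le_C0 by (intro mult_left_mono) auto
    finally show ?thesis .
  qed
  have lower: "sqrt c0 * 2 ^ (m - 1) \<le> Bn E X j"
  proof -
    have "sqrt c0 * 2 ^ (m - 1) \<le> sqrt c0 * sqrt (real j)"
      using \<open>2 ^ (m - 1) \<le> sqrt (real j)\<close> c0_pos by (intro mult_left_mono) auto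
    also have "\<dots> \<le> Bn E X j"
      using Bn_lower[of j] by (simp add: real_sqrt_mult)
    finally show ?thesis .
  qed
  have "Bn E X i / Bn E X j \<le> (sqrt C0 * 2 ^ l) / (sqrt c0 * 2 ^ (m - 1))"
    using upper lower c0_pos c0_le_C0 by (intro frac_le) auto
  also have "\<dots> = 2 * sqrt (C0 / c0) * (2 ^ l / 2 ^ m)"
  proof -
    have "(2::real) ^ m = 2 * 2 ^ (m - 1)"
      using assms(3) by (metis Suc_diff_le diff_Suc_1 power_Suc)
    then show ?thesis using c0_pos by (simp add: real_sqrt_divide)
  qed
  also have "(2::real) ^ l / 2 ^ m = 2 powr (real l - real m)"
    by (simp add: powr_diff powr_realpow)
  finally show ?thesis .
qed

context
  fixes f :: "real \<Rightarrow> real" and B L :: real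
  assumes f_bound: "\<And>x. \<bar>f x\<bar> \<le> B" and f_lipschitz: "\<And>x y. \<bar>f x - f y\<bar> \<le> L * \<bar>x - y\<bar>"
    and B_pos: "B > 0" and L_pos: "L > 0"
    and f_certain: "E' (\<lambda>w. f (\<xi> w)) = - E' (\<lambda>w. - f (\<xi> w))"
begin

lemma cblip1_f: "cblip1 f"
  using f_bound f_lipschitz by (rule cblip1I)

lemma cblip1_f_centered: "cblip1 (\<lambda>x. f (r * x) - c)"
  using cblip1_affine[OF cblip1_scale_arg[OF cblip1_f], of 1 r "- c"] by simp

lemma E_f_Wn_abs_le: "\<bar>E (\<lambda>v. f (Wn E X n v))\<bar> \<le> B"
  using E_abs_le[OF H_cblip1_comp[OF cblip1_f H_Wn] f_bound] .

lemma H_xi_k_mult: "(\<lambda>w. xi_k E X f i w * xi_k E X f j w) \<in> H"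
proof -
  define ci cj where "ci = E (\<lambda>v. f (Wn E X i v))" and "cj = E (\<lambda>v. f (Wn E X j v))"
  have "bdd_lipschitz2 (\<lambda>a b. (f (1 * a) - ci) * (f (1 * b) - cj))"
    by (rule bdd_lipschitz2_mult[OF cblip1_f_centered cblip1_f_centered])
  from H_bdd_lipschitz2_comp[OF this H_Wn H_Wn] show ?thesis
    unfolding xi_k_def ci_def cj_def by simp
qed

text \<open>This is where \<open>f \<in> calH E' \<xi>\<close> enters: Song's rate puts both \<open>E[f(W\<^sub>n)]\<close> and
  \<open>-E[-f(W\<^sub>n)]\<close> close to the common value \<open>E'[f(\<xi>)] = -E'[-f(\<xi>)]\<close>.\<close>

lemma E_f_Wn_uncertainty_le:
  assumes "n \<ge> 1"
  shows "E (\<lambda>w. f (Wn E X n w)) + E (\<lambda>w. - f (Wn E X n w)) \<le> 2 * L * D * real n powr (- \<alpha> / 2)"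
proof -
  have "\<bar>E (\<lambda>w. f (Wn E X n w)) - E' (\<lambda>w. f (\<xi> w))\<bar> \<le> L * D * real n powr (- \<alpha> / 2)"
    by (rule rate_lipschitz[OF assms cblip1_f L_pos f_lipschitz])
  moreover have "\<bar>E (\<lambda>w. - f (Wn E X n w)) - E' (\<lambda>w. - f (\<xi> w))\<bar> \<le> L * D * real n powr (- \<alpha> / 2)"
  proof (rule rate_lipschitz[OF assms _ L_pos])
    show "cblip1 (\<lambda>x. - f x)" using cblip1_affine[OF cblip1_f, of "-1" 0] by simp
    show "\<bar>- f x - - f y\<bar> \<le> L * \<bar>x - y\<bar>" for x y
      using f_lipschitz[of x y] by (simp only: minus_diff_minus abs_minus_cancel)
  qed
  ultimately show ?thesis using f_certain by linarith
qed

lemma f_Wn_increment_diff_le: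
  assumes "1 \<le> i" "i \<le> j"
  shows "\<bar>f (Wn E X j w) - f ((Sn X j w - Sn X i w) / Bn E X j)\<bar>
    \<le> min (2 * B) (L * Bn E X i / Bn E X j * \<bar>Wn E X i w\<bar>)"
proof -
  have "Bn E X i > 0" "Bn E X j > 0" using Bn_pos assms by auto
  then have "\<bar>Wn E X j w - (Sn X j w - Sn X i w) / Bn E X j\<bar> = Bn E X i / Bn E X j * \<bar>Wn E X i w\<bar>"
    by (simp add: Wn_def diff_divide_distrib abs_divide abs_mult)
  then show ?thesis
    using bdd_lipschitz_diff_le_min[OF f_bound f_lipschitz,
        of "Wn E X j w" "(Sn X j w - Sn X i w) / Bn E X j"] by simp
qed

lemma E_f_increment_centered_le:
  assumes "1 \<le> i" "i \<le> j"
  defines "\<gamma> \<equiv> E (\<lambda>w. min (2 * B) (L * Bn E X i / Bn E X j * \<bar>Wn E X i w\<bar>))"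
  defines "c \<equiv> E (\<lambda>v. f (Wn E X j v))"
  shows "E (\<lambda>w. f ((Sn X j w - Sn X i w) / Bn E X j) - c) \<le> \<gamma> + 2 * L * D * real j powr (- \<alpha> / 2)"
    and "E (\<lambda>w. - (f ((Sn X j w - Sn X i w) / Bn E X j) - c)) \<le> \<gamma> + 2 * L * D * real j powr (- \<alpha> / 2)"
proof -
  define T where "T w = (Sn X j w - Sn X i w) / Bn E X j" for w
  define g where "g w = min (2 * B) (L * Bn E X i / Bn E X j * \<bar>Wn E X i w\<bar>)" for w
  have "Bn E X i > 0" "Bn E X j > 0" using Bn_pos assms by auto
  then have H_g: "g \<in> H"
    unfolding g_def using B_pos L_pos
    by (intro H_cblip1_comp[OF cblip1_min_scaled_abs H_Wn]) auto
  have "(\<lambda>w. (1 / Bn E X j) * (Sn X j w - Sn X i w)) \<in> H"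
    by (rule H_scale[OF H_Sn_diff])
  then have "T \<in> H" unfolding T_def by simp
  then have H_fT: "(\<lambda>w. f (T w)) \<in> H" "(\<lambda>w. - f (T w)) \<in> H"
    using H_cblip1_comp[OF cblip1_f] H_cblip1_comp[OF cblip1_affine[OF cblip1_f, of "-1" 0]]
    by simp_all
  have H_fW: "(\<lambda>w. f (Wn E X j w)) \<in> H" "(\<lambda>w. - f (Wn E X j w)) \<in> H"
    using H_cblip1_comp[OF cblip1_f H_Wn] H_cblip1_comp[OF cblip1_affine[OF cblip1_f, of "-1" 0] H_Wn]
    by simp_all
  have diff: "\<bar>f (Wn E X j w) - f (T w)\<bar> \<le> g w" for w
    unfolding T_def g_def using f_Wn_increment_diff_le[OF assms(1,2)] .
  have pointwise: "f (T w) \<le> f (Wn E X j w) + g w" "- f (T w) \<le> - f (Wn E X j w) + g w" for w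
    using diff[of w] by (auto simp: abs_le_iff)
  have "E (\<lambda>w. f (T w)) \<le> E (\<lambda>w. f (Wn E X j w) + g w)"
    using pointwise(1) by (intro E_mono H_fT H_add H_fW H_g)
  also have "\<dots> \<le> c + \<gamma>"
    unfolding c_def \<gamma>_def g_def[symmetric] by (rule E_add_le[OF H_fW(1) H_g])
  finally have upper: "E (\<lambda>w. f (T w)) \<le> c + \<gamma>" .
  have "E (\<lambda>w. - f (T w)) \<le> E (\<lambda>w. - f (Wn E X j w) + g w)"
    using pointwise(2) by (intro E_mono H_fT H_add H_fW H_g)
  also have "\<dots> \<le> E (\<lambda>w. - f (Wn E X j w)) + \<gamma>"
    unfolding \<gamma>_def g_def[symmetric] by (rule E_add_le[OF H_fW(2) H_g])
  also have "\<dots> \<le> - c + 2 * L * D * real j powr (- \<alpha> / 2) + \<gamma>"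
    using E_f_Wn_uncertainty_le[of j] assms unfolding c_def by simp
  finally have lower: "E (\<lambda>w. - f (T w)) \<le> - c + 2 * L * D * real j powr (- \<alpha> / 2) + \<gamma>" .
  have "0 \<le> 2 * L * D * real j powr (- \<alpha> / 2)" using L_pos D_pos by simp
  moreover have "E (\<lambda>w. f (T w) - c) = E (\<lambda>w. f (T w)) - c"
    using E_add_const[OF H_fT(1), of "- c"] by simp
  moreover have "E (\<lambda>w. - (f (T w) - c)) = E (\<lambda>w. - f (T w)) + c"
    using E_add_const[OF H_fT(2), of c] by simp
  ultimately show "E (\<lambda>w. f ((Sn X j w - Sn X i w) / Bn E X j) - c) \<le> \<gamma> + 2 * L * D * real j powr (- \<alpha> / 2)"
    and "E (\<lambda>w. - (f ((Sn X j w - Sn X i w) / Bn E X j) - c)) \<le> \<gamma> + 2 * L * D * real j powr (- \<alpha> / 2)"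
    using upper lower unfolding T_def by linarith+
qed

lemma E_centered_increment_product_le:
  assumes "1 \<le> i" "i < j"
  shows "E (\<lambda>w. (f (Sn X i w / Bn E X i) - E (\<lambda>v. f (Wn E X i v)))
      * (f ((Sn X j w - Sn X i w) / Bn E X j) - E (\<lambda>v. f (Wn E X j v))))
    \<le> 2 * B * (E (\<lambda>w. min (2 * B) (L * Bn E X i / Bn E X j * \<bar>Wn E X i w\<bar>))
      + 2 * L * D * real j powr (- \<alpha> / 2))"
proof (rule E_mult_indep_increment_le)
  show "cblip1 (\<lambda>a. f (a / Bn E X i) - E (\<lambda>v. f (Wn E X i v)))"
    and "cblip1 (\<lambda>b. f (b / Bn E X j) - E (\<lambda>v. f (Wn E X j v)))"
    using cblip1_f_centered[of "1 / Bn E X i"] cblip1_f_centered[of "1 / Bn E X j"] by simp_all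
  show "\<bar>f (a / Bn E X i) - E (\<lambda>v. f (Wn E X i v))\<bar> \<le> 2 * B" for a
    using f_bound[of "a / Bn E X i"] E_f_Wn_abs_le[of i] by linarith
qed (use assms E_f_increment_centered_le[OF assms(1) less_imp_le[OF assms(2)]] in auto)

lemma xi_k_mult_le_increment_product:
  assumes "1 \<le> i" "i \<le> j"
  shows "xi_k E X f i w * xi_k E X f j w
    \<le> (f (Sn X i w / Bn E X i) - E (\<lambda>v. f (Wn E X i v)))
        * (f ((Sn X j w - Sn X i w) / Bn E X j) - E (\<lambda>v. f (Wn E X j v)))
      + 2 * B * min (2 * B) (L * Bn E X i / Bn E X j * \<bar>Wn E X i w\<bar>)"
proof -
  define u where "u = f (Sn X i w / Bn E X i) - E (\<lambda>v. f (Wn E X i v))"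
  have "\<bar>u\<bar> \<le> 2 * B"
    using E_f_Wn_abs_le[of i] f_bound[of "Sn X i w / Bn E X i"] unfolding u_def by linarith
  have "xi_k E X f i w * xi_k E X f j w
      - u * (f ((Sn X j w - Sn X i w) / Bn E X j) - E (\<lambda>v. f (Wn E X j v)))
      = u * (f (Wn E X j w) - f ((Sn X j w - Sn X i w) / Bn E X j))"
    unfolding xi_k_def u_def by (simp add: Wn_def algebra_simps)
  also have "\<dots> \<le> \<bar>u\<bar> * \<bar>f (Wn E X j w) - f ((Sn X j w - Sn X i w) / Bn E X j)\<bar>"
    by (simp flip: abs_mult)
  also have "\<dots> \<le> 2 * B * min (2 * B) (L * Bn E X i / Bn E X j * \<bar>Wn E X i w\<bar>)"
    using \<open>\<bar>u\<bar> \<le> 2 * B\<close> f_Wn_increment_diff_le[OF assms] B_pos by (intro mult_mono) auto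
  finally show ?thesis unfolding u_def by simp
qed

lemma E_xi_k_mult_le:
  assumes "1 \<le> i" "i < j"
  shows "E (\<lambda>w. xi_k E X f i w * xi_k E X f j w)
    \<le> 4 * B * L * (Bn E X i / Bn E X j) * (1 + E' (\<lambda>w. (\<xi> w)^2) + D)
      + 4 * B * L * D * real j powr (- \<alpha> / 2)"
proof -
  define \<rho> where "\<rho> = L * Bn E X i / Bn E X j"
  define g where "g w = min (2 * B) (\<rho> * \<bar>Wn E X i w\<bar>)" for w
  define P where "P w = (f (Sn X i w / Bn E X i) - E (\<lambda>v. f (Wn E X i v)))
      * (f ((Sn X j w - Sn X i w) / Bn E X j) - E (\<lambda>v. f (Wn E X j v)))" for w
  have "\<rho> > 0" unfolding \<rho>_def using Bn_pos assms L_pos by simp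
  then have H_g: "g \<in> H"
    unfolding g_def using B_pos by (intro H_cblip1_comp[OF cblip1_min_scaled_abs H_Wn]) auto
  have "bdd_lipschitz2 (\<lambda>a b. (f ((1 / Bn E X i) * a) - E (\<lambda>v. f (Wn E X i v)))
      * (f ((1 / Bn E X j) * b) - E (\<lambda>v. f (Wn E X j v))))"
    by (rule bdd_lipschitz2_mult[OF cblip1_f_centered cblip1_f_centered])
  from H_bdd_lipschitz2_comp[OF this H_Sn[of i] H_Sn_diff[of j i]] have H_P: "P \<in> H"
    unfolding P_def by simp
  have H_Bg: "(\<lambda>w. 2 * B * g w) \<in> H" and E_Bg: "E (\<lambda>w. 2 * B * g w) = 2 * B * E g"
    using H_scale[OF H_g] E_scale[OF H_g] B_pos by simp_all
  have "E (\<lambda>w. xi_k E X f i w * xi_k E X f j w) \<le> E (\<lambda>w. P w + 2 * B * g w)"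
  proof (rule E_mono[OF H_xi_k_mult H_add[OF H_P H_Bg]])
    show "xi_k E X f i w * xi_k E X f j w \<le> P w + 2 * B * g w" for w
      using xi_k_mult_le_increment_product[of i j w] assms unfolding P_def g_def \<rho>_def by simp
  qed
  also have "\<dots> \<le> E P + 2 * B * E g"
    using E_add_le[OF H_P H_Bg] unfolding E_Bg by simp
  also have "\<dots> \<le> 2 * B * (E g + 2 * L * D * real j powr (- \<alpha> / 2)) + 2 * B * E g"
    using E_centered_increment_product_le[OF assms] unfolding P_def g_def \<rho>_def by simp
  also have "\<dots> = 4 * B * E g + 4 * B * L * D * real j powr (- \<alpha> / 2)"
    by (simp add: algebra_simps)
  also have "\<dots> \<le> 4 * B * (\<rho> * (1 + E' (\<lambda>w. (\<xi> w)^2) + D)) + 4 * B * L * D * real j powr (- \<alpha> / 2)"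
    unfolding g_def using assms \<open>\<rho> > 0\<close> B_pos E_min_scaled_abs_Wn_le[of i \<rho> "2 * B"] by simp
  finally show ?thesis unfolding \<rho>_def by (simp add: mult.assoc)
qed

lemma E_xi_k_mult_block_le:
  assumes "1 \<le> l" "l < m" "i \<in> {4^(l-1)..<4^l}" "j \<in> {4^(m-1)..<4^m}"
  shows "E (\<lambda>w. xi_k E X f i w * xi_k E X f j w)
    \<le> 8 * B * L * sqrt (C0 / c0) * (1 + E' (\<lambda>w. (\<xi> w)^2) + D) * 2 powr (real l - real m)
      + 4 * B * L * D * 2 powr (\<alpha> * (1 - real m))"
proof -
  have "1 \<le> i" using assms(3) by (metis atLeastLessThan_iff le_trans one_le_power nat_1_add_1 one_le_numeral)
  have "i < j"
  proof -
    have "(4::nat) ^ l \<le> 4 ^ (m - 1)" using assms(2) by (intro power_increasing) auto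
    moreover have "i < 4 ^ l" "4 ^ (m - 1) \<le> j" using assms(3,4) by auto
    ultimately show ?thesis by linarith
  qed
  have "0 \<le> E' (\<lambda>w. (\<xi> w)^2)" by (rule E'.E_nonneg[OF H'_xi_sq]) simp
  then have nonneg: "0 \<le> 4 * B * L * (1 + E' (\<lambda>w. (\<xi> w)^2) + D)" "0 \<le> 4 * B * L * D"
    using B_pos L_pos D_pos by simp_all
  have ratio: "Bn E X i / Bn E X j \<le> 2 * sqrt (C0 / c0) * 2 powr (real l - real m)"
    using assms by (intro Bn_ratio_le \<open>1 \<le> i\<close>) auto
  have rate_bound: "real j powr (- \<alpha> / 2) \<le> 2 powr (\<alpha> * (1 - real m))"
    using assms alpha_pos by (intro rate_block_le) auto
  have "E (\<lambda>w. xi_k E X f i w * xi_k E X f j w)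
      \<le> 4 * B * L * (Bn E X i / Bn E X j) * (1 + E' (\<lambda>w. (\<xi> w)^2) + D)
        + 4 * B * L * D * real j powr (- \<alpha> / 2)"
    by (rule E_xi_k_mult_le[OF \<open>1 \<le> i\<close> \<open>i < j\<close>])
  also have "\<dots> = (4 * B * L * (1 + E' (\<lambda>w. (\<xi> w)^2) + D)) * (Bn E X i / Bn E X j)
        + (4 * B * L * D) * real j powr (- \<alpha> / 2)"
    by (simp only: mult_ac)
  also have "\<dots> \<le> (4 * B * L * (1 + E' (\<lambda>w. (\<xi> w)^2) + D)) * (2 * sqrt (C0 / c0) * 2 powr (real l - real m))
        + (4 * B * L * D) * 2 powr (\<alpha> * (1 - real m))"
    using nonneg ratio rate_bound by (intro add_mono mult_left_mono)
  also have "\<dots> = 8 * B * L * sqrt (C0 / c0) * (1 + E' (\<lambda>w. (\<xi> w)^2) + D) * 2 powr (real l - real m)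
        + 4 * B * L * D * 2 powr (\<alpha> * (1 - real m))"
    by (simp add: algebra_simps)
  finally show ?thesis .
qed

lemma E_Z_l_mult_le:
  "\<exists>M3 M4. M3 > 0 \<and> M4 > 0 \<and>
     (\<forall>l m. 1 \<le> l \<longrightarrow> l < m \<longrightarrow>
        E (\<lambda>w. Z_l E X f l w * Z_l E X f m w)
          \<le> 9 * M3 * 2 powr (real l - real m) + 9 * M4 * 2 powr (\<alpha> * (1 - real m)))"
proof (intro exI conjI allI impI)
  define M3 where "M3 = 8 * B * L * sqrt (C0 / c0) * (1 + E' (\<lambda>w. (\<xi> w)^2) + D)"
  define M4 where "M4 = 4 * B * L * D"
  have "0 \<le> E' (\<lambda>w. (\<xi> w)^2)" by (rule E'.E_nonneg[OF H'_xi_sq]) simp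
  then show "M3 > 0" "M4 > 0"
    unfolding M3_def M4_def using B_pos L_pos D_pos c0_pos c0_le_C0 by simp_all
  fix l m :: nat assume "1 \<le> l" "l < m"
  define R where "R = M3 * 2 powr (real l - real m) + M4 * 2 powr (\<alpha> * (1 - real m))"
  have "R \<ge> 0" unfolding R_def using \<open>M3 > 0\<close> \<open>M4 > 0\<close> by simp
  have Z_l: "Z_l E X f k w = (\<Sum>i\<in>{4^(k-1)..<4^k}. (1 / real i) * xi_k E X f i w)" for k w
    unfolding Z_l_def by simp
  have "E (\<lambda>w. Z_l E X f l w * Z_l E X f m w)
      \<le> R * (\<Sum>i\<in>{4^(l-1)..<4^l}. 1 / real i) * (\<Sum>j\<in>{4^(m-1)..<4^m}. 1 / real j)"
    unfolding Z_l R_def M3_def M4_def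
    using E_xi_k_mult_block_le[OF \<open>1 \<le> l\<close> \<open>l < m\<close>]
    by (intro E_sum_mult_sum_le H_xi_k_mult) auto
  also have "\<dots> \<le> R * 3 * 3"
    using harmonic_block_le[of l] harmonic_block_le[of m] \<open>1 \<le> l\<close> \<open>l < m\<close> \<open>R \<ge> 0\<close>
    by (intro mult_mono) (auto intro: sum_nonneg)
  finally show "E (\<lambda>w. Z_l E X f l w * Z_l E X f m w)
      \<le> 9 * M3 * 2 powr (real l - real m) + 9 * M4 * 2 powr (\<alpha> * (1 - real m))"
    unfolding R_def by (simp add: algebra_simps)
qed

end

end

lemma clt_rate_from_song_bound:
  assumes "sublinear_space M H E" "sublinear_space M' H' E'" "standing H E \<beta> X" "\<beta> \<ge> 1"
    and "\<xi> \<in> H'" "(\<lambda>w. (\<xi> w)^2) \<in> H'" "\<alpha> > 0" "C > 0" "song_bound H E E' \<xi> \<beta> \<alpha> C"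
    and "\<forall>i\<ge>1. (\<lambda>w. \<bar>X i w\<bar> powr (2 + \<alpha>)) \<in> H"
    and moments: "\<forall>i\<ge>1. E (\<lambda>w. \<bar>X i w\<bar> powr (2 + \<alpha>)) \<le> K"
  obtains c0 C0 D where "clt_rate M H E X M' H' E' \<xi> c0 C0 \<alpha> D"
proof -
  interpret sublinear_expectation M H E by (rule sublinear_expectation.intro) fact
  obtain c0 C0 where "c0 > 0" and sigm: "\<And>i. i \<ge> 1 \<Longrightarrow> sqrt c0 \<le> sigm E X i"
    "\<And>i. i \<ge> 1 \<Longrightarrow> sigm E X i \<le> sqrt C0"
    using standing_sigm_bounds[OF assms(3,4)] by blast
  have "clt_rate M H E X M' H' E' \<xi> c0 C0 \<alpha> (C * max K 1 / c0 powr (1 + \<alpha> / 2))"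
  proof unfold_locales
    show "indep_seq E X" "\<And>i. i \<ge> 1 \<Longrightarrow> X i \<in> H"
      using assms(3) unfolding standing_def by auto
    show "sqrt (c0 * n) \<le> Bn E X n" "Bn E X n \<le> sqrt (C0 * n)" for n :: nat
      using Bn_bounds[OF \<open>c0 > 0\<close> sigm] by auto
    show "0 < C * max K 1 / c0 powr (1 + \<alpha> / 2)"
      using \<open>C > 0\<close> \<open>c0 > 0\<close> by simp
    fix n :: nat and g :: "real \<Rightarrow> real"
    assume "n \<ge> 1" "cblip1 g" "\<And>x y. \<bar>g x - g y\<bar> \<le> \<bar>x - y\<bar>"
    then have "\<bar>E (\<lambda>w. g (Wn E X n w)) - E' (\<lambda>w. g (\<xi> w))\<bar> \<le>
        C * Max ((\<lambda>i. E (\<lambda>w. \<bar>X i w\<bar> powr (2 + \<alpha>)) / sigm E X i powr (2 + \<alpha>)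
                     * (sigm E X i / Bn E X n) powr \<alpha>) ` {1..n})"
      using assms(3,9,10) unfolding song_bound_def by blast
    also have "\<dots> \<le> C * (max K 1 / c0 powr (1 + \<alpha> / 2) * real n powr (- \<alpha> / 2))"
    proof (rule mult_left_mono)
      have "E (\<lambda>w. \<bar>X i w\<bar> powr (2 + \<alpha>)) \<le> max K 1" if "i \<ge> 1" for i
        using moments that by (simp add: le_max_iff_disj)
      then show "Max ((\<lambda>i. E (\<lambda>w. \<bar>X i w\<bar> powr (2 + \<alpha>)) / sigm E X i powr (2 + \<alpha>)
                     * (sigm E X i / Bn E X n) powr \<alpha>) ` {1..n})
          \<le> max K 1 / c0 powr (1 + \<alpha> / 2) * real n powr (- \<alpha> / 2)"
        using \<open>\<alpha> > 0\<close> by (intro song_error_le[OF \<open>c0 > 0\<close> sigm(1) Bn_bounds(1)[OF \<open>c0 > 0\<close> sigm]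
            \<open>n \<ge> 1\<close>]) auto
    qed (use \<open>C > 0\<close> in simp)
    finally show "\<bar>E (\<lambda>w. g (Wn E X n w)) - E' (\<lambda>w. g (\<xi> w))\<bar>
        \<le> C * max K 1 / c0 powr (1 + \<alpha> / 2) * real n powr (- \<alpha> / 2)"
      by simp
  qed (use assms \<open>c0 > 0\<close> in auto)
  then show thesis by (rule that)
qed

theorem lemma4p3:
  fixes M :: "'w measure" and H :: "('w \<Rightarrow> real) set" and E :: "('w \<Rightarrow> real) \<Rightarrow> real"
    and M' :: "'v measure" and H' :: "('v \<Rightarrow> real) set" and E' :: "('v \<Rightarrow> real) \<Rightarrow> real"
    and X :: "nat \<Rightarrow> 'w \<Rightarrow> real" and \<xi> :: "'v \<Rightarrow> real"
    and \<beta> \<alpha> C :: real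
  assumes "sublinear_space M H E" and "condA H E"
    and "sublinear_space M' H' E'" and "condA H' E'"
    and "\<beta> \<ge> 1"
    and "standing H E \<beta> X"
    and "G_normal H' E' \<xi>"
    and "sqrt (E' (\<lambda>w. (\<xi> w)^2)) = 2 * \<beta> / (1 + \<beta>)"
    and "sqrt (- (E' (\<lambda>w. - ((\<xi> w)^2)))) = 2 / (1 + \<beta>)"
    and "0 < \<alpha>" and "\<alpha> < 1" and "C > 0"
    and "song_bound H E E' \<xi> \<beta> \<alpha> C"
    and "\<forall>i\<ge>1. (\<lambda>w. \<bar>X i w\<bar> powr (2 + \<alpha>)) \<in> H"
    and "\<exists>K. \<forall>i\<ge>1. E (\<lambda>w. \<bar>X i w\<bar> powr (2 + \<alpha>)) \<le> K"
  shows "\<forall>f\<in>calH E' \<xi>. \<exists>M3 M4. M3 > 0 \<and> M4 > 0 \<and>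
           (\<forall>l m. 1 \<le> l \<longrightarrow> l < m \<longrightarrow>
              E (\<lambda>w. Z_l E X f l w * Z_l E X f m w)
                \<le> 9 * M3 * 2 powr (real l - real m) + 9 * M4 * 2 powr (\<alpha> * (1 - real m)))"
proof
  fix f assume "f \<in> calH E' \<xi>"
  then have "cblip1 f" and f_certain: "E' (\<lambda>w. f (\<xi> w)) = - E' (\<lambda>w. - f (\<xi> w))"
    unfolding calH_def by auto
  obtain B L where "B > 0" "\<And>x. \<bar>f x\<bar> \<le> B" "L > 0" "\<And>x y. \<bar>f x - f y\<bar> \<le> L * \<bar>x - y\<bar>"
    using \<open>cblip1 f\<close> by (rule cblip1E) blast
  have "\<xi> \<in> H'" "(\<lambda>w. (\<xi> w)^2) \<in> H'"
    using assms(7) unfolding G_normal_def by auto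
  moreover obtain K where "\<forall>i\<ge>1. E (\<lambda>w. \<bar>X i w\<bar> powr (2 + \<alpha>)) \<le> K"
    using assms(15) by blast
  ultimately obtain c0 C0 D where "clt_rate M H E X M' H' E' \<xi> c0 C0 \<alpha> D"
    using clt_rate_from_song_bound assms(1,3,5,6,10,12,13,14) by metis
  then show "\<exists>M3 M4. M3 > 0 \<and> M4 > 0 \<and>
      (\<forall>l m. 1 \<le> l \<longrightarrow> l < m \<longrightarrow>
         E (\<lambda>w. Z_l E X f l w * Z_l E X f m w)
           \<le> 9 * M3 * 2 powr (real l - real m) + 9 * M4 * 2 powr (\<alpha> * (1 - real m)))"
    by (rule clt_rate.E_Z_l_mult_le) fact+
qed

end
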